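(* Let $\mathcal{H}$ be a complex Hilbert space and $T\in\mathcal{B}(\mathcal{H})$. (a) If $T$ is a $\Delta_T$-regular concave operator such that the compression $\widehat{T}=P_{\overline{\mathcal{R}(\Delta_T)}}T|_{\overline{\mathcal{R}(\Delta_T)}}$ is quasinormal, then for every integer $n\ge2$, $T^n$ is a concave operator which is $\Delta_{T^n}$-regular. (b) Suppose $T$ is concave and that $\sigma^{-1}P_{\mathcal{N}(\Delta_T)}T|_{\overline{\mathcal{R}(\Delta_T)}}$ is an isometry, where $\sigma>0$, $\sigma^2=\|\Delta_T\|+1$. Then $T$ is $\Delta_T$-regular if and only if $\widehat{T}=P_{\overline{\mathcal{R}(\Delta_T)}}T|_{\overline{\mathcal{R}(\Delta_T)}}$ is a quasinormal contraction.
   Context: For an operator $A$, $\Delta_A=A^*A-I$. $T$ is concave if $T^{*2}T^2-2T^*T+I\le0$. For a positive operator $A$, $T$ is $A$-regular if $AT=A^{1/2}TA^{1/2}$. An operator $Q$ is quasinormal if $QQ^*Q=Q^*Q^2$. (In the paper, the hypothesis of (a) is phrased as "satisfies one of the equivalent conditions" of a theorem, one of which is quasinormality of $\widehat T$; these conditions are equivalent for $\Delta_T$-regular concave $T$.) *)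

theory Defs
  imports "HOL-Analysis.Analysis"
begin

text \<open>The distribution has no complex inner product spaces, so we introduce them
as a type class: a real normed vector space with a compatible complex scalar
multiplication and an inner product (linear in the first argument, conjugate
linear in the second) inducing the norm.\<close>

class complex_inner = real_normed_vector +
  fixes scaleC :: "complex \<Rightarrow> 'a \<Rightarrow> 'a" (infixr \<open>*\<^sub>C\<close> 75)
    and cinner :: "'a \<Rightarrow> 'a \<Rightarrow> complex"
  assumes scaleC_add_right: "a *\<^sub>C (x + y) = a *\<^sub>C x + a *\<^sub>C y"
    and scaleC_add_left: "(a + b) *\<^sub>C x = a *\<^sub>C x + b *\<^sub>C x"
    and scaleC_scaleC: "a *\<^sub>C (b *\<^sub>C x) = (a * b) *\<^sub>C x"
    and scaleC_one: "1 *\<^sub>C x = x"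
    and scaleR_scaleC: "r *\<^sub>R x = complex_of_real r *\<^sub>C x"
    and cinner_commute: "cinner x y = cnj (cinner y x)"
    and cinner_add_left: "cinner (x + y) z = cinner x z + cinner y z"
    and cinner_scaleC_left: "cinner (a *\<^sub>C x) y = a * cinner x y"
    and cinner_self_real: "Im (cinner x x) = 0"
    and cinner_self_nonneg: "0 \<le> Re (cinner x x)"
    and cinner_self_eq_zero: "cinner x x = 0 \<longleftrightarrow> x = 0"
    and norm_eq_sqrt_cinner: "norm x = sqrt (Re (cinner x x))"

class chilbert_space = complex_inner + complete_space

definition cbounded :: "('a::complex_inner \<Rightarrow> 'a) \<Rightarrow> bool" where
  "cbounded T \<longleftrightarrow> (\<forall>x y. T (x + y) = T x + T y) \<and> (\<forall>c x. T (c *\<^sub>C x) = c *\<^sub>C T x)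
      \<and> (\<exists>K. \<forall>x. norm (T x) \<le> norm x * K)"

definition adj :: "('a::complex_inner \<Rightarrow> 'a) \<Rightarrow> ('a \<Rightarrow> 'a)" where
  "adj T = (THE S. \<forall>x y. cinner (T x) y = cinner x (S y))"

definition Delta :: "('a::complex_inner \<Rightarrow> 'a) \<Rightarrow> ('a \<Rightarrow> 'a)" where
  "Delta T = (\<lambda>x. adj T (T x) - x)"

definition opos :: "('a::complex_inner \<Rightarrow> 'a) \<Rightarrow> bool" where
  "opos A \<longleftrightarrow> cbounded A \<and> (\<forall>x. Im (cinner (A x) x) = 0 \<and> 0 \<le> Re (cinner (A x) x))"

definition concave_op :: "('a::complex_inner \<Rightarrow> 'a) \<Rightarrow> bool" where
  "concave_op T \<longleftrightarrow> opos (\<lambda>x. - (adj T (adj T (T (T x))) - 2 *\<^sub>R adj T (T x) + x))"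

definition op_sqrt :: "('a::complex_inner \<Rightarrow> 'a) \<Rightarrow> ('a \<Rightarrow> 'a)" where
  "op_sqrt A = (THE B. opos B \<and> (\<forall>x. B (B x) = A x))"

definition regular :: "('a::complex_inner \<Rightarrow> 'a) \<Rightarrow> ('a \<Rightarrow> 'a) \<Rightarrow> bool" where
  "regular A T \<longleftrightarrow> (\<forall>x. A (T x) = op_sqrt A (T (op_sqrt A x)))"

definition quasinormal :: "('a::complex_inner \<Rightarrow> 'a) \<Rightarrow> bool" where
  "quasinormal Q \<longleftrightarrow> (\<forall>x. Q (adj Q (Q x)) = adj Q (Q (Q x)))"

definition proj :: "'a::complex_inner set \<Rightarrow> 'a \<Rightarrow> 'a" where
  "proj M x = (THE m. m \<in> M \<and> (\<forall>y\<in>M. cinner (x - m) y = 0))"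

text \<open>The compression \<open>P_M T|_M\<close>, represented as the operator \<open>P_M T P_M\<close> on the
whole space (it agrees with \<open>P_M T|_M\<close> on M and vanishes on the orthogonal
complement of M).\<close>
definition compression :: "'a::complex_inner set \<Rightarrow> ('a \<Rightarrow> 'a) \<Rightarrow> ('a \<Rightarrow> 'a)" where
  "compression M T = (\<lambda>x. proj M (T (proj M x)))"

end

theory Submission
  imports Defs
begin

text \<open>Concavity makes \<open>k \<mapsto> \<parallel>T\<^sup>k x\<parallel>\<^sup>2\<close> a concave nonnegative sequence, hence nondecreasing; so
\<open>\<Delta>\<^sub>T \<ge> 0\<close>, the kernel of \<open>\<Delta>\<^sub>T\<close> is \<open>T\<close>-invariant and all powers of \<open>T\<close> are concave. For positive \<open>A\<close>
and \<open>W\<close> leaving the kernel of \<open>A\<close> invariant, \<open>A\<close>-regularity of \<open>W\<close> is equivalent to \<open>A W = P W A\<close>, where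
\<open>P\<close> projects onto the closure of the range of \<open>A\<close>; this needs the positive square root, which is
built from the binomial series of \<open>1 - sqrt (1 - t)\<close>. For \<open>T\<close> the relation reads \<open>\<Delta>\<^sub>T T = C \<Delta>\<^sub>T\<close> with
\<open>C\<close> the compression. Then \<open>\<Delta>(T\<^sup>n) = (\<Sum>k<n. T\<^sup>*\<^sup>k \<Delta>\<^sub>T T\<^sup>k) = (\<Sum>k<n. (C\<^sup>* C)\<^sup>k \<Delta>\<^sub>T)\<close>, and as a quasinormal \<open>C\<close>
commutes with \<open>C\<^sup>* C\<close>, the same relation holds for \<open>T\<^sup>n\<close>, whose \<open>\<Delta>\<close> has the kernel of \<open>\<Delta>\<^sub>T\<close>.

In (b), \<open>\<parallel>T x\<parallel>\<^sup>2 = \<parallel>x\<parallel>\<^sup>2 + \<langle>\<Delta>\<^sub>T x, x\<rangle> \<le> \<sigma>\<^sup>2 \<parallel>x\<parallel>\<^sup>2\<close>, so the isometry hypothesis forces \<open>C = 0\<close>;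
then \<open>T\<close> is \<open>\<Delta>\<^sub>T\<close>-regular by the criterion above, and \<open>C\<close> is trivially a quasinormal contraction.\<close>

lemma scaleC_zero_right [simp]: "a *\<^sub>C (0::'a::complex_inner) = 0"
  by (metis add.right_neutral add_left_cancel scaleC_add_right)

lemma cinner_add_right: "cinner x (y + z) = cinner x y + cinner x (z::'a::complex_inner)"
  by (subst (1 2 3) cinner_commute) (simp add: cinner_add_left)

lemma cinner_scaleC_right: "cinner x (a *\<^sub>C y) = cnj a * cinner x (y::'a::complex_inner)"
  by (subst (1 2) cinner_commute) (simp add: cinner_scaleC_left)

lemma cinner_zero_left [simp]: "cinner 0 (x::'a::complex_inner) = 0"
  using cinner_add_left[of 0 0 x] by simp

lemma cinner_zero_right [simp]: "cinner x (0::'a::complex_inner) = 0"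
  by (subst cinner_commute) simp

lemma cinner_minus_left: "cinner (- x) (y::'a::complex_inner) = - cinner x y"
  using cinner_add_left[of "-x" x y] by (simp add: eq_neg_iff_add_eq_0)

lemma cinner_minus_right: "cinner x (- (y::'a::complex_inner)) = - cinner x y"
  using cinner_add_right[of x "-y" y] by (simp add: eq_neg_iff_add_eq_0)

lemma cinner_diff_left: "cinner (x - y) (z::'a::complex_inner) = cinner x z - cinner y z"
  unfolding diff_conv_add_uminus by (simp only: cinner_add_left cinner_minus_left)

lemma cinner_diff_right: "cinner x (y - (z::'a::complex_inner)) = cinner x y - cinner x z"
  unfolding diff_conv_add_uminus by (simp only: cinner_add_right cinner_minus_right)

lemma cinner_scaleR_left: "cinner (r *\<^sub>R x) (y::'a::complex_inner) = complex_of_real r * cinner x y"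
  by (simp add: scaleR_scaleC cinner_scaleC_left)

lemma cinner_self: "cinner x (x::'a::complex_inner) = complex_of_real ((norm x)\<^sup>2)"
  using norm_eq_sqrt_cinner[of x] cinner_self_nonneg[of x] cinner_self_real[of x]
  by (simp add: complex_eq_iff)

lemma power2_norm_eq_cinner: "(norm (x::'a::complex_inner))\<^sup>2 = Re (cinner x x)"
  by (simp add: cinner_self)

lemma cinner_eq_0_imp_eq_0: "(\<And>y. cinner x y = 0) \<Longrightarrow> (x::'a::complex_inner) = 0"
  using cinner_self_eq_zero[of x] by simp

lemma cinner_ext_left: "(\<And>y. cinner x y = cinner z y) \<Longrightarrow> (x::'a::complex_inner) = z"
  by (metis cinner_diff_left cinner_eq_0_imp_eq_0 diff_self eq_iff_diff_eq_0)

lemma cinner_ext_right: "(\<And>y. cinner y x = cinner y z) \<Longrightarrow> (x::'a::complex_inner) = z"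
  by (rule cinner_ext_left, subst (1 2) cinner_commute, simp)

lemma norm_scaleC: "norm (a *\<^sub>C (x::'a::complex_inner)) = cmod a * norm x"
proof -
  have "cinner (a *\<^sub>C x) (a *\<^sub>C x) = (a * cnj a) * cinner x x"
    by (simp add: cinner_scaleC_left cinner_scaleC_right)
  also have "\<dots> = complex_of_real ((cmod a * norm x)\<^sup>2)"
    by (simp only: complex_mult_cnj cinner_self of_real_mult [symmetric] power_mult_distrib
        cmod_power2)
  finally have "(norm (a *\<^sub>C x))\<^sup>2 = (cmod a * norm x)\<^sup>2"
    by (simp add: power2_norm_eq_cinner)
  then show ?thesis by (simp add: power2_eq_iff_nonneg)
qed

lemma bounded_linear_scaleC: "bounded_linear (\<lambda>x::'a::complex_inner. a *\<^sub>C x)"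
proof
  show "a *\<^sub>C (x + y) = a *\<^sub>C x + a *\<^sub>C y" for x y :: 'a by (rule scaleC_add_right)
  show "a *\<^sub>C (r *\<^sub>R x) = r *\<^sub>R (a *\<^sub>C x)" for r and x :: 'a
    by (simp add: scaleR_scaleC scaleC_scaleC mult.commute)
  show "\<exists>K. \<forall>x::'a. norm (a *\<^sub>C x) \<le> norm x * K"
    by (rule exI[of _ "cmod a"]) (simp add: norm_scaleC mult.commute)
qed

lemma norm_add_power2:
  "(norm (x + y))\<^sup>2 = (norm x)\<^sup>2 + (norm y)\<^sup>2 + 2 * Re (cinner x (y::'a::complex_inner))"
proof -
  have "cinner (x + y) (x + y) = cinner x x + cinner y y + (cinner x y + cinner y x)"
    by (simp add: cinner_add_left cinner_add_right)
  moreover have "Re (cinner x y + cinner y x) = 2 * Re (cinner x y)"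
    by (subst (2) cinner_commute) simp
  ultimately show ?thesis by (simp add: power2_norm_eq_cinner)
qed

lemma pythagoras:
  "cinner x y = 0 \<Longrightarrow> (norm (x + y))\<^sup>2 = (norm x)\<^sup>2 + (norm (y::'a::complex_inner))\<^sup>2"
  by (simp add: norm_add_power2)

lemma parallelogram_law:
  "(norm (a + b))\<^sup>2 + (norm (a - b))\<^sup>2 = 2 * (norm a)\<^sup>2 + 2 * (norm (b::'a::complex_inner))\<^sup>2"
  using norm_add_power2[of a b] norm_add_power2[of a "-b"] by (simp add: cinner_minus_right)

lemma quadratic_nonneg_imp_le:
  fixes p q c :: real
  assumes nonneg: "\<And>t. 0 \<le> p - 2 * t * c + t\<^sup>2 * c * q" and "0 \<le> p" "0 \<le> q" "0 \<le> c"
  shows "c \<le> p * q"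
proof (cases "q = 0")
  case True
  show ?thesis
  proof (rule ccontr)
    assume "\<not> c \<le> p * q"
    then have "0 < c" using True by simp
    moreover have "0 \<le> p - 2 * ((p + 1) / c) * c" using nonneg[of "(p + 1) / c"] True by simp
    ultimately show False using \<open>0 \<le> p\<close> by simp
  qed
next
  case False
  then have "0 < q" using \<open>0 \<le> q\<close> by simp
  have "0 \<le> p - 2 * (1/q) * c + (1/q)\<^sup>2 * c * q" by (rule nonneg)
  then show ?thesis using \<open>0 < q\<close> by (simp add: power2_eq_square field_simps)
qed

lemma hermitian_form_cauchy_schwarz:
  fixes f :: "'a::complex_inner \<Rightarrow> 'a \<Rightarrow> complex"
  assumes add: "\<And>x y z. f (x + y) z = f x z + f y z"
    and scale: "\<And>a x y. f (a *\<^sub>C x) y = a * f x y"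
    and herm: "\<And>x y. f x y = cnj (f y x)"
    and pos: "\<And>x. Im (f x x) = 0 \<and> 0 \<le> Re (f x x)"
  shows "(cmod (f x y))\<^sup>2 \<le> Re (f x x) * Re (f y y)"
proof -
  have add_right: "f x (y + z) = f x y + f x z" for x y z
    by (metis add herm complex_cnj_add)
  have scale_right: "f x (a *\<^sub>C y) = cnj a * f x y" for a x y
    by (metis scale herm complex_cnj_mult complex_cnj_cnj)
  have real_diag: "f x x = complex_of_real (Re (f x x))" for x
    using pos[of x] by (simp add: complex_eq_iff)
  define c where "c = f x y"
  define p where "p = Re (f x x)"
  define q where "q = Re (f y y)"
  have "0 \<le> p - 2 * t * (cmod c)\<^sup>2 + t\<^sup>2 * (cmod c)\<^sup>2 * q" for t :: real
  proof -
    define a where "a = - complex_of_real t * c"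
    have "f (x + a *\<^sub>C y) (x + a *\<^sub>C y) = f x x + (a * cnj c + cnj a * c) + (a * cnj a) * f y y"
      using herm[of y x] by (simp add: add add_right scale scale_right c_def algebra_simps)
    also have "a * cnj c + cnj a * c = - complex_of_real (2 * t * (cmod c)\<^sup>2)"
      by (simp add: a_def complex_norm_square[symmetric] algebra_simps)
    also have "(a * cnj a) * f y y = complex_of_real (t\<^sup>2 * (cmod c)\<^sup>2 * q)"
      by (subst real_diag)
        (simp add: a_def q_def complex_norm_square[symmetric] algebra_simps power2_eq_square)
    finally have "Re (f (x + a *\<^sub>C y) (x + a *\<^sub>C y)) = p - 2 * t * (cmod c)\<^sup>2 + t\<^sup>2 * (cmod c)\<^sup>2 * q"
      by (simp add: p_def)
    then show ?thesis using pos by metis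
  qed
  moreover have "0 \<le> p" "0 \<le> q" using pos unfolding p_def q_def by auto
  ultimately show ?thesis unfolding c_def p_def q_def by (rule quadratic_nonneg_imp_le) simp
qed

lemma cinner_cauchy_schwarz: "cmod (cinner x y) \<le> norm x * norm (y::'a::complex_inner)"
proof -
  have "(cmod (cinner x y))\<^sup>2 \<le> Re (cinner x x) * Re (cinner y y)"
    by (rule hermitian_form_cauchy_schwarz[OF cinner_add_left cinner_scaleC_left cinner_commute])
      (simp add: cinner_self_real cinner_self_nonneg)
  also have "\<dots> = (norm x * norm y)\<^sup>2" by (simp add: power2_norm_eq_cinner power_mult_distrib)
  finally show ?thesis by (simp add: power2_le_iff_abs_le)
qed

lemma bounded_linear_cinner_left: "bounded_linear (\<lambda>x::'a::complex_inner. cinner x y)"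
proof
  show "cinner (x + z) y = cinner x y + cinner z y" for x z :: 'a by (rule cinner_add_left)
  show "cinner (r *\<^sub>R x) y = r *\<^sub>R cinner x y" for r and x :: 'a
    by (simp add: cinner_scaleR_left scaleR_conv_of_real)
  show "\<exists>K. \<forall>x::'a. norm (cinner x y) \<le> norm x * K"
    using cinner_cauchy_schwarz by blast
qed

lemma cboundedI:
  assumes "\<And>x y. T (x + y) = T x + T y" "\<And>c x. T (c *\<^sub>C x) = c *\<^sub>C T x"
    "\<And>x. norm (T x) \<le> norm x * K"
  shows "cbounded T"
  using assms unfolding cbounded_def by blast

context
  fixes T :: "'a::complex_inner \<Rightarrow> 'a"
  assumes T: "cbounded T"
begin

lemma cbounded_apply_add: "T (x + y) = T x + T y"
  using T unfolding cbounded_def by blast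

lemma cbounded_apply_scaleC: "T (c *\<^sub>C x) = c *\<^sub>C T x"
  using T unfolding cbounded_def by blast

lemma cbounded_apply_scaleR: "T (r *\<^sub>R x) = r *\<^sub>R T x"
  by (simp add: scaleR_scaleC cbounded_apply_scaleC)

lemma cbounded_bounded_linear: "bounded_linear T"
proof
  show "T (x + y) = T x + T y" for x y by (rule cbounded_apply_add)
  show "T (r *\<^sub>R x) = r *\<^sub>R T x" for r x by (rule cbounded_apply_scaleR)
  show "\<exists>K. \<forall>x. norm (T x) \<le> norm x * K" using T unfolding cbounded_def by blast
qed

lemma cbounded_apply_0 [simp]: "T 0 = 0"
  using linear_0[OF bounded_linear.linear[OF cbounded_bounded_linear]] .

lemma cbounded_apply_diff: "T (x - y) = T x - T y"
  using linear_diff[OF bounded_linear.linear[OF cbounded_bounded_linear]] .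

lemma cbounded_apply_sum: "T (\<Sum>i\<in>I. f i) = (\<Sum>i\<in>I. T (f i))"
  using linear_sum[OF bounded_linear.linear[OF cbounded_bounded_linear]] .

lemma cbounded_norm_le_onorm: "norm (T x) \<le> onorm T * norm x"
  using onorm[OF cbounded_bounded_linear] .

lemma cbounded_onorm_nonneg: "0 \<le> onorm T"
  using onorm_pos_le[OF cbounded_bounded_linear] .

lemma Re_cinner_le_onorm: "Re (cinner (T x) x) \<le> onorm T * (norm x)\<^sup>2"
proof -
  have "Re (cinner (T x) x) \<le> norm (T x) * norm x"
    using complex_Re_le_cmod cinner_cauchy_schwarz order_trans by blast
  also have "\<dots> \<le> onorm T * norm x * norm x"
    by (intro mult_right_mono cbounded_norm_le_onorm) auto
  finally show ?thesis by (simp add: power2_eq_square mult_ac)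
qed

end

lemma cbounded_comp: "cbounded S \<Longrightarrow> cbounded T \<Longrightarrow> cbounded (\<lambda>x. S (T x))"
  by (rule cboundedI[where K = "onorm S * onorm T"])
    (simp_all add: cbounded_apply_add cbounded_apply_scaleC
      order_trans[OF cbounded_norm_le_onorm
        mult_left_mono[OF cbounded_norm_le_onorm cbounded_onorm_nonneg]]
      mult_ac)

lemma cbounded_ident: "cbounded (\<lambda>x::'a::complex_inner. x)"
  by (rule cboundedI[where K=1]) auto

lemma cbounded_add: "cbounded S \<Longrightarrow> cbounded T \<Longrightarrow> cbounded (\<lambda>x. S x + T x)"
  by (rule cboundedI[where K = "onorm S + onorm T"])
    (simp_all add: cbounded_apply_add cbounded_apply_scaleC scaleC_add_right algebra_simps
      order_trans[OF norm_triangle_ineq add_mono[OF cbounded_norm_le_onorm cbounded_norm_le_onorm]])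

lemma cbounded_scaleR:
  assumes "cbounded T" shows "cbounded (\<lambda>x. r *\<^sub>R T x)"
proof (rule cboundedI[where K = "\<bar>r\<bar> * onorm T"])
  show "r *\<^sub>R T (x + y) = r *\<^sub>R T x + r *\<^sub>R T y" for x y
    using assms by (simp add: cbounded_apply_add scaleR_add_right)
  show "r *\<^sub>R T (c *\<^sub>C x) = c *\<^sub>C (r *\<^sub>R T x)" for c x
    using assms by (simp add: cbounded_apply_scaleC scaleR_scaleC scaleC_scaleC mult.commute)
  show "norm (r *\<^sub>R T x) \<le> norm x * (\<bar>r\<bar> * onorm T)" for x
    using mult_left_mono[OF cbounded_norm_le_onorm[OF assms, of x], of "\<bar>r\<bar>"] by (simp add: mult_ac)
qed

lemma cbounded_diff: "cbounded S \<Longrightarrow> cbounded T \<Longrightarrow> cbounded (\<lambda>x. S x - T x)"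
  using cbounded_add[of S "\<lambda>x. (-1) *\<^sub>R T x"] cbounded_scaleR[of T "-1"] by simp

lemma cbounded_funpow: "cbounded T \<Longrightarrow> cbounded (T ^^ n)"
  by (induction n)
    (simp_all add: cbounded_ident[unfolded id_def[symmetric]] cbounded_comp[unfolded comp_def[symmetric]])

section \<open>Orthogonal projections\<close>

definition csubspace :: "'a::complex_inner set \<Rightarrow> bool" where
  "csubspace M \<longleftrightarrow> 0 \<in> M \<and> (\<forall>x\<in>M. \<forall>y\<in>M. x + y \<in> M) \<and> (\<forall>c. \<forall>x\<in>M. c *\<^sub>C x \<in> M)"

lemma csubspace_0: "csubspace M \<Longrightarrow> 0 \<in> M"
  unfolding csubspace_def by blast

lemma csubspace_add: "csubspace M \<Longrightarrow> x \<in> M \<Longrightarrow> y \<in> M \<Longrightarrow> x + y \<in> M"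
  unfolding csubspace_def by blast

lemma csubspace_scaleC: "csubspace M \<Longrightarrow> x \<in> M \<Longrightarrow> c *\<^sub>C x \<in> M"
  unfolding csubspace_def by blast

lemma csubspace_scaleR: "csubspace M \<Longrightarrow> x \<in> M \<Longrightarrow> r *\<^sub>R x \<in> M"
  unfolding scaleR_scaleC by (rule csubspace_scaleC)

lemma csubspace_diff: "csubspace M \<Longrightarrow> x \<in> M \<Longrightarrow> y \<in> M \<Longrightarrow> x - y \<in> M"
  using csubspace_add[of M x "(-1) *\<^sub>R y"] csubspace_scaleR[of M y "-1"] by simp

lemma Cauchy_of_dist_le_add:
  fixes X :: "nat \<Rightarrow> 'a::metric_space"
  assumes "\<And>i j. dist (X i) (X j) \<le> g i + g j" and "g \<longlonglongrightarrow> 0"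
  shows "Cauchy X"
proof (rule metric_CauchyI)
  fix e :: real assume "0 < e"
  then obtain N where N: "\<And>n. n \<ge> N \<Longrightarrow> \<bar>g n\<bar> < e / 2"
    using tendstoD[OF assms(2), of "e/2"] by (auto simp: eventually_sequentially)
  show "\<exists>M. \<forall>m\<ge>M. \<forall>n\<ge>M. dist (X m) (X n) < e"
    using N assms(1) by (smt (verit, best) field_sum_of_halves)
qed

lemma csubspace_near_points_close:
  assumes M: "csubspace M" and "a \<in> M" "b \<in> M"
    and dist_le: "\<And>y. y \<in> M \<Longrightarrow> d \<le> norm (x - y)" and "0 \<le> d"
    and "norm (x - a) \<le> d + e" "norm (x - b) \<le> d + e'"
  shows "(norm (a - b))\<^sup>2 \<le> 2 * ((d + e)\<^sup>2 - d\<^sup>2) + 2 * ((d + e')\<^sup>2 - d\<^sup>2)"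
proof -
  \<comment> \<open>the midpoint of \<open>a\<close> and \<open>b\<close> lies in \<open>M\<close>, so it is at least \<open>d\<close> away from \<open>x\<close>\<close>
  have "(1/2) *\<^sub>R (a + b) \<in> M"
    by (intro csubspace_scaleR[OF M] csubspace_add[OF M] assms(2,3))
  moreover have "(x - a) + (x - b) = 2 *\<^sub>R (x - (1/2) *\<^sub>R (a + b))"
    by (simp add: algebra_simps scaleR_2)
  ultimately have "2 * d \<le> norm ((x - a) + (x - b))" using dist_le by fastforce
  then have "(2 * d)\<^sup>2 \<le> (norm ((x - a) + (x - b)))\<^sup>2" using \<open>0 \<le> d\<close> by (intro power_mono) auto
  moreover have "(norm (x - a))\<^sup>2 \<le> (d + e)\<^sup>2" "(norm (x - b))\<^sup>2 \<le> (d + e')\<^sup>2"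
    using assms(6,7) by (auto intro: power_mono)
  ultimately show ?thesis
    using parallelogram_law[of "x - a" "x - b"] by (simp add: power_mult_distrib norm_minus_commute)
qed

lemma closed_csubspace_closest_point_exists:
  fixes M :: "'a::chilbert_space set"
  assumes M: "csubspace M" "closed M"
  shows "\<exists>m\<in>M. \<forall>y\<in>M. norm (x - m) \<le> norm (x - y)"
proof -
  define d where "d = infdist x M"
  define e where "e n = 1 / (real n + 1)" for n
  have "0 \<le> d" unfolding d_def by (rule infdist_nonneg)
  have d_le: "d \<le> norm (x - y)" if "y \<in> M" for y
    unfolding d_def using infdist_le[OF that, of x] by (simp add: dist_norm)
  have "e n > 0" for n unfolding e_def by simp
  have e_lim: "e \<longlonglongrightarrow> 0"
    unfolding e_def using LIMSEQ_inverse_real_of_nat by (simp add: inverse_eq_divide add.commute)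
  have "\<exists>m\<in>M. norm (x - m) < d + e n" for n
  proof -
    have "M \<noteq> {}" using csubspace_0[OF M(1)] by blast
    then have "Inf ((\<lambda>a. dist x a) ` M) < d + e n"
      using infdist_notempty[of M x] \<open>e n > 0\<close> unfolding d_def by simp
    then show ?thesis
      using cInf_lessD[of "(\<lambda>a. dist x a) ` M"] \<open>M \<noteq> {}\<close> by (auto simp: dist_norm)
  qed
  then obtain m where m_in: "\<And>n. m n \<in> M" and m_near: "\<And>n. norm (x - m n) < d + e n"
    by metis
  define g where "g n = sqrt (2 * ((d + e n)\<^sup>2 - d\<^sup>2))" for n
  have g_nonneg: "0 \<le> 2 * ((d + e n)\<^sup>2 - d\<^sup>2)" for n
    using \<open>0 \<le> d\<close> \<open>e n > 0\<close> by (simp add: power2_eq_square algebra_simps)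
  have "(\<lambda>n. sqrt (2 * ((d + e n)\<^sup>2 - d\<^sup>2))) \<longlonglongrightarrow> sqrt (2 * ((d + 0)\<^sup>2 - d\<^sup>2))"
    by (intro tendsto_intros e_lim)
  then have g_lim: "g \<longlonglongrightarrow> 0" unfolding g_def by simp
  have "Cauchy m"
  proof (rule Cauchy_of_dist_le_add[OF _ g_lim])
    fix i j
    have "(norm (m i - m j))\<^sup>2 \<le> 2 * ((d + e i)\<^sup>2 - d\<^sup>2) + 2 * ((d + e j)\<^sup>2 - d\<^sup>2)"
      using m_near[of i] m_near[of j]
      by (intro csubspace_near_points_close[OF M(1) m_in m_in d_le \<open>0 \<le> d\<close>]) auto
    then have "dist (m i) (m j) \<le> sqrt (2 * ((d + e i)\<^sup>2 - d\<^sup>2) + 2 * ((d + e j)\<^sup>2 - d\<^sup>2))"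
      by (simp add: dist_norm real_le_rsqrt)
    also have "\<dots> \<le> g i + g j"
      unfolding g_def by (rule sqrt_add_le_add_sqrt[OF g_nonneg g_nonneg])
    finally show "dist (m i) (m j) \<le> g i + g j" .
  qed
  then obtain m0 where m_lim: "m \<longlonglongrightarrow> m0"
    using Cauchy_convergent_iff convergent_def by blast
  have "m0 \<in> M" using closed_sequentially[OF M(2)] m_in m_lim by blast
  have "(\<lambda>n. norm (x - m n)) \<longlonglongrightarrow> norm (x - m0)" by (intro tendsto_intros m_lim)
  moreover have "(\<lambda>n. d + e n) \<longlonglongrightarrow> d + 0" by (intro tendsto_intros e_lim)
  ultimately have "norm (x - m0) \<le> d + 0"
    using m_near by (intro LIMSEQ_le[where X = "\<lambda>n. norm (x - m n)"]) (auto intro: less_imp_le)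
  then show ?thesis using \<open>m0 \<in> M\<close> d_le by force
qed

lemma closest_point_orthogonal:
  fixes M :: "'a::complex_inner set"
  assumes M: "csubspace M" and "m \<in> M" "y \<in> M"
    and closest: "\<And>y. y \<in> M \<Longrightarrow> norm (x - m) \<le> norm (x - y)"
  shows "cinner (x - m) y = 0"
proof (rule ccontr)
  define c where "c = cinner (x - m) y"
  assume "cinner (x - m) y \<noteq> 0"
  then have "c \<noteq> 0" unfolding c_def by simp
  \<comment> \<open>moving from \<open>m\<close> a small step \<open>t c\<close> towards \<open>y\<close> gets strictly closer to \<open>x\<close>\<close>
  define t where "t = 1 / ((norm y)\<^sup>2 + 1)"
  have "0 < t" "t * (norm y)\<^sup>2 < 1" unfolding t_def by (simp_all add: add_nonneg_pos)
  define a where "a = - (complex_of_real t * c)"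
  have "m - a *\<^sub>C y \<in> M"
    by (intro csubspace_diff[OF M] \<open>m \<in> M\<close> csubspace_scaleC[OF M] \<open>y \<in> M\<close>)
  from closest[OF this] have "(norm (x - m))\<^sup>2 \<le> (norm ((x - m) + a *\<^sub>C y))\<^sup>2"
    by (simp add: power_mono algebra_simps)
  also have "\<dots> = (norm (x - m))\<^sup>2 + (cmod a * norm y)\<^sup>2 + 2 * Re (cnj a * c)"
    by (simp add: norm_add_power2 norm_scaleC cinner_scaleC_right c_def)
  also have "cnj a * c = - complex_of_real (t * (cmod c)\<^sup>2)"
    unfolding a_def by (simp add: complex_norm_square[symmetric] mult_ac)
  also have "cmod a = t * cmod c" unfolding a_def using \<open>0 < t\<close> by (simp add: norm_mult)
  finally have "0 \<le> t * (cmod c)\<^sup>2 * (t * (norm y)\<^sup>2 - 2)"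
    by (simp add: power2_eq_square algebra_simps)
  moreover have "0 < t * (cmod c)\<^sup>2" using \<open>0 < t\<close> \<open>c \<noteq> 0\<close> by simp
  ultimately show False using \<open>t * (norm y)\<^sup>2 < 1\<close> by (simp add: zero_le_mult_iff)
qed

lemma proj_eqI:
  assumes M: "csubspace M" and "m \<in> M" and "\<forall>y\<in>M. cinner (x - m) y = 0"
  shows "proj M x = m"
  unfolding proj_def
proof (rule the_equality)
  show "m \<in> M \<and> (\<forall>y\<in>M. cinner (x - m) y = 0)" using assms by blast
  fix m' assume m': "m' \<in> M \<and> (\<forall>y\<in>M. cinner (x - m') y = 0)"
  have "m - m' \<in> M" using M assms(2) m' by (simp add: csubspace_diff)
  then have "cinner ((x - m') - (x - m)) (m - m') = 0"
    using m' assms(3) by (simp add: cinner_diff_left)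
  then show "m' = m" using cinner_self_eq_zero[of "m - m'"] by simp
qed

context
  fixes M :: "'a::chilbert_space set"
  assumes M: "csubspace M" "closed M"
begin

lemma proj_in: "proj M x \<in> M"
  and proj_orthogonal: "y \<in> M \<Longrightarrow> cinner (x - proj M x) y = 0"
proof -
  obtain m where "m \<in> M" "\<forall>y\<in>M. norm (x - m) \<le> norm (x - y)"
    using closed_csubspace_closest_point_exists[OF M] by blast
  then have "proj M x = m" "\<forall>y\<in>M. cinner (x - m) y = 0"
    using closest_point_orthogonal[OF M(1)] proj_eqI[OF M(1)] by auto
  then show "proj M x \<in> M" "y \<in> M \<Longrightarrow> cinner (x - proj M x) y = 0"
    using \<open>m \<in> M\<close> by auto
qed

lemma proj_orthogonal': "y \<in> M \<Longrightarrow> cinner y (x - proj M x) = 0"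
  using proj_orthogonal cinner_commute by (metis complex_cnj_zero)

lemma cinner_proj_left: "y \<in> M \<Longrightarrow> cinner (proj M x) y = cinner x y"
  using proj_orthogonal[of y x] by (simp add: cinner_diff_left)

lemma proj_ident: "x \<in> M \<Longrightarrow> proj M x = x"
  using proj_eqI[OF M(1), of x x] by simp

lemma proj_idem: "proj M (proj M x) = proj M x"
  using proj_ident proj_in by blast

lemma proj_eq_0_of_orthogonal: "(\<And>y. y \<in> M \<Longrightarrow> cinner x y = 0) \<Longrightarrow> proj M x = 0"
  using proj_eqI[OF M(1), of 0 x] csubspace_0[OF M(1)] by simp

lemma power2_norm_proj: "(norm x)\<^sup>2 = (norm (proj M x))\<^sup>2 + (norm (x - proj M x))\<^sup>2"
  using pythagoras[OF proj_orthogonal'[OF proj_in], of x x] by simp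

lemma cbounded_proj: "cbounded (proj M)"
proof (rule cboundedI[where K=1])
  show "proj M (x + y) = proj M x + proj M y" for x y
    by (rule proj_eqI[OF M(1)])
      (auto simp: csubspace_add[OF M(1)] proj_in cinner_diff_left cinner_add_left cinner_proj_left)
  show "proj M (c *\<^sub>C x) = c *\<^sub>C proj M x" for c x
    by (rule proj_eqI[OF M(1)])
      (auto simp: csubspace_scaleC[OF M(1)] proj_in cinner_diff_left cinner_scaleC_left
        cinner_proj_left)
  show "norm (proj M x) \<le> norm x * 1" for x
    using power2_norm_proj[of x] by (simp add: power2_le_imp_le)
qed

end

section \<open>Adjoints\<close>

lemma riesz_representation:
  fixes f :: "'a::chilbert_space \<Rightarrow> complex"
  assumes add: "\<And>x y. f (x + y) = f x + f y" and scale: "\<And>c x. f (c *\<^sub>C x) = c * f x"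
    and bounded: "\<And>x. cmod (f x) \<le> norm x * K"
  shows "\<exists>z. \<forall>x. f x = cinner x z"
proof (cases "\<forall>x. f x = 0")
  case True
  then show ?thesis by (intro exI[of _ 0]) simp
next
  case False
  have "bounded_linear f"
  proof
    show "f (x + y) = f x + f y" for x y by (rule add)
    show "f (r *\<^sub>R x) = r *\<^sub>R f x" for r x
      using scale[of "complex_of_real r" x] by (simp add: scaleR_scaleC scaleR_conv_of_real)
  qed (use bounded in auto)
  then have f0: "f 0 = 0" and f_diff: "f (x - y) = f x - f y" for x y
    by (simp_all add: linear_simps bounded_linear.linear)
  define N where "N = {x. f x = 0}"
  have N: "csubspace N" "closed N"
    unfolding N_def csubspace_def using add scale f0
    by (auto intro!: closed_Collect_eq continuous_on_const
        linear_continuous_on \<open>bounded_linear f\<close>)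
  obtain u where "f u \<noteq> 0" using False by blast
  define w where "w = u - proj N u"
  have "f (proj N u) = 0" using proj_in[OF N, of u] unfolding N_def by simp
  then have "f w = f u" unfolding w_def by (simp add: f_diff)
  then have "w \<noteq> 0" using \<open>f u \<noteq> 0\<close> f0 by auto
  \<comment> \<open>\<open>w \<bottom> N\<close>, and \<open>f x w - f w x \<in> N\<close> for every \<open>x\<close>\<close>
  have "f x = cinner x ((cnj (f w) / complex_of_real ((norm w)\<^sup>2)) *\<^sub>C w)" for x
  proof -
    have "f (f x *\<^sub>C w - f w *\<^sub>C x) = 0" by (simp add: f_diff scale)
    then have "cinner (f x *\<^sub>C w - f w *\<^sub>C x) w = 0"
      unfolding w_def using proj_orthogonal'[OF N] unfolding N_def by blast
    then have "f x * complex_of_real ((norm w)\<^sup>2) = f w * cinner x w"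
      by (simp add: cinner_diff_left cinner_scaleC_left cinner_self)
    then show ?thesis using \<open>w \<noteq> 0\<close> by (simp add: cinner_scaleC_right field_simps)
  qed
  then show ?thesis by blast
qed

lemma adj_eqI: "(\<And>x y. cinner (T x) y = cinner x (S y)) \<Longrightarrow> adj T = S"
  unfolding adj_def
proof (rule the_equality)
  assume S: "\<And>x y. cinner (T x) y = cinner x (S y)"
  then show "\<forall>x y. cinner (T x) y = cinner x (S y)" by blast
  fix S' assume "\<forall>x y. cinner (T x) y = cinner x (S' y)"
  then show "S' = S" using S by (intro ext cinner_ext_right) metis
qed

context
  fixes T :: "'a::chilbert_space \<Rightarrow> 'a"
  assumes T: "cbounded T"
begin

lemma cinner_adj_right: "cinner (T x) y = cinner x (adj T y)"
proof -
  have "\<exists>z. \<forall>x. cinner (T x) y = cinner x z" for y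
  proof (rule riesz_representation[where K = "onorm T * norm y"])
    show "cinner (T (x + x')) y = cinner (T x) y + cinner (T x') y" for x x'
      by (simp add: cbounded_apply_add[OF T] cinner_add_left)
    show "cinner (T (c *\<^sub>C x)) y = c * cinner (T x) y" for c x
      by (simp add: cbounded_apply_scaleC[OF T] cinner_scaleC_left)
    show "cmod (cinner (T x) y) \<le> norm x * (onorm T * norm y)" for x
      using order_trans[OF cinner_cauchy_schwarz
          mult_right_mono[OF cbounded_norm_le_onorm[OF T] norm_ge_zero]]
      by (simp add: mult_ac)
  qed
  then obtain S where "\<forall>x y. cinner (T x) y = cinner x (S y)" by metis
  moreover from this have "adj T = S" by (intro adj_eqI) blast
  ultimately show ?thesis by simp
qed

lemma cinner_adj_left: "cinner (adj T y) x = cinner y (T x)"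
  by (metis cinner_adj_right cinner_commute)

lemma cbounded_adj: "cbounded (adj T)"
proof (rule cboundedI[where K = "onorm T"])
  show "adj T (x + y) = adj T x + adj T y" for x y
    by (rule cinner_ext_right) (simp add: cinner_adj_right[symmetric] cinner_add_right)
  show "adj T (c *\<^sub>C x) = c *\<^sub>C adj T x" for c x
    by (rule cinner_ext_right) (simp add: cinner_adj_right[symmetric] cinner_scaleC_right)
  show "norm (adj T y) \<le> norm y * onorm T" for y
  proof -
    have "(norm (adj T y))\<^sup>2 = Re (cinner (T (adj T y)) y)"
      by (simp add: power2_norm_eq_cinner cinner_adj_right)
    also have "\<dots> \<le> norm (T (adj T y)) * norm y"
      using complex_Re_le_cmod cinner_cauchy_schwarz order_trans by blast
    also have "\<dots> \<le> onorm T * norm (adj T y) * norm y"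
      by (intro mult_right_mono cbounded_norm_le_onorm[OF T]) auto
    finally show ?thesis
      using cbounded_onorm_nonneg[OF T]
      by (cases "norm (adj T y) = 0") (auto simp: power2_eq_square algebra_simps)
  qed
qed

end

lemma adj_funpow:
  fixes T :: "'a::chilbert_space \<Rightarrow> 'a"
  assumes T: "cbounded T"
  shows "adj (T ^^ n) = adj T ^^ n"
proof (rule adj_eqI)
  show "cinner ((T ^^ n) x) y = cinner x ((adj T ^^ n) y)" for x y
  proof (induction n arbitrary: y)
    case (Suc n)
    have "cinner ((T ^^ Suc n) x) y = cinner ((T ^^ n) x) (adj T y)"
      by (simp add: cinner_adj_right[OF T])
    also have "\<dots> = cinner x ((adj T ^^ Suc n) y)" by (simp add: Suc funpow_swap1)
    finally show ?case .
  qed simp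
qed

lemma opos_cbounded: "opos A \<Longrightarrow> cbounded A"
  and opos_Im: "opos A \<Longrightarrow> Im (cinner (A x) x) = 0"
  and opos_Re: "opos A \<Longrightarrow> 0 \<le> Re (cinner (A x) x)"
  unfolding opos_def by blast+

lemma opos_selfadjoint:
  fixes A :: "'a::complex_inner \<Rightarrow> 'a"
  assumes "opos A"
  shows "cinner (A x) y = cinner x (A y)"
proof -
  have A: "cbounded A" using assms by (rule opos_cbounded)
  define a where "a = cinner (A x) y"
  define b where "b = cinner (A y) x"
  \<comment> \<open>polarisation: the forms at \<open>x + y\<close> and \<open>x + i y\<close> are real\<close>
  have "Im (cinner (A (x + y)) (x + y)) = 0" by (rule opos_Im[OF assms])
  then have "Im a + Im b = 0"
    using opos_Im[OF assms, of x] opos_Im[OF assms, of y]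
    by (simp add: cbounded_apply_add[OF A] cinner_add_left cinner_add_right a_def b_def)
  moreover have "Im (cinner (A (x + \<i> *\<^sub>C y)) (x + \<i> *\<^sub>C y)) = 0" by (rule opos_Im[OF assms])
  then have "Re b - Re a = 0"
    using opos_Im[OF assms, of x] opos_Im[OF assms, of y]
    by (simp add: cbounded_apply_add[OF A] cbounded_apply_scaleC[OF A] cinner_add_left
        cinner_add_right cinner_scaleC_left cinner_scaleC_right a_def b_def)
  ultimately have "a = cnj b" by (simp add: complex_eq_iff)
  then show ?thesis unfolding a_def b_def by (metis cinner_commute)
qed

lemma opos_cauchy_schwarz:
  fixes A :: "'a::complex_inner \<Rightarrow> 'a"
  assumes "opos A"
  shows "(cmod (cinner (A x) y))\<^sup>2 \<le> Re (cinner (A x) x) * Re (cinner (A y) y)"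
proof (rule hermitian_form_cauchy_schwarz[of "\<lambda>x y. cinner (A x) y"])
  have A: "cbounded A" using assms by (rule opos_cbounded)
  show "cinner (A (x + y)) z = cinner (A x) z + cinner (A y) z" for x y z
    by (simp add: cbounded_apply_add[OF A] cinner_add_left)
  show "cinner (A (a *\<^sub>C x)) y = a * cinner (A x) y" for a x y
    by (simp add: cbounded_apply_scaleC[OF A] cinner_scaleC_left)
  show "cinner (A x) y = cnj (cinner (A y) x)" for x y
    by (metis opos_selfadjoint[OF assms] cinner_commute)
  show "Im (cinner (A x) x) = 0 \<and> 0 \<le> Re (cinner (A x) x)" for x
    using assms unfolding opos_def by blast
qed

lemma opos_apply_eq_0:
  fixes A :: "'a::complex_inner \<Rightarrow> 'a"
  assumes "opos A" and "Re (cinner (A x) x) \<le> 0"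
  shows "A x = 0"
proof -
  have "Re (cinner (A x) x) = 0" using assms opos_Re[OF assms(1), of x] by simp
  then have "(cmod (cinner (A x) (A x)))\<^sup>2 \<le> 0"
    using opos_cauchy_schwarz[OF assms(1), of x "A x"] by simp
  then show ?thesis using cinner_self_eq_zero[of "A x"] by simp
qed

lemma opos_norm_le:
  fixes A :: "'a::complex_inner \<Rightarrow> 'a"
  assumes "opos A" and form_le: "\<And>x. Re (cinner (A x) x) \<le> (norm x)\<^sup>2"
  shows "norm (A x) \<le> norm x"
proof -
  have "((norm (A x))\<^sup>2)\<^sup>2 = (cmod (cinner (A x) (A x)))\<^sup>2"
    by (simp only: cinner_self norm_of_real) simp
  also have "\<dots> \<le> Re (cinner (A x) x) * Re (cinner (A (A x)) (A x))"
    by (rule opos_cauchy_schwarz[OF assms(1)])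
  also have "\<dots> \<le> (norm x)\<^sup>2 * (norm (A x))\<^sup>2"
    by (intro mult_mono form_le opos_Re[OF assms(1)]) auto
  finally have "(norm (A x))\<^sup>2 \<le> (norm x)\<^sup>2"
    by (cases "norm (A x) = 0") (auto simp: power2_eq_square)
  then show ?thesis by (simp add: power2_le_iff_abs_le)
qed

section \<open>Square roots of positive operators\<close>

text \<open>The square root is built from the binomial series \<open>1 - sqrt (1 - t) = (\<Sum>k. c k * t ^ k)\<close>,
whose coefficients are determined by \<open>f\<^sup>2 = 2 f - t\<close>.\<close>

fun sqrt_coeff :: "nat \<Rightarrow> real" where
  "sqrt_coeff n = (if n = 0 then 0 else if n = 1 then 1/2
     else (\<Sum>i\<in>{1..<n}. sqrt_coeff i * sqrt_coeff (n - i)) / 2)"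

declare sqrt_coeff.simps [simp del]

lemma sqrt_coeff_0 [simp]: "sqrt_coeff 0 = 0"
  by (simp add: sqrt_coeff.simps)

definition sqrt_coeff_sum :: "nat \<Rightarrow> real" where
  "sqrt_coeff_sum N = (\<Sum>k<N. sqrt_coeff k)"

lemma sqrt_coeff_nonneg: "0 \<le> sqrt_coeff n"
proof (induction n rule: less_induct)
  case (less n)
  then show ?case by (subst sqrt_coeff.simps) (auto intro!: sum_nonneg)
qed

lemma sqrt_coeff_convolution:
  "(\<Sum>i\<le>n. sqrt_coeff i * sqrt_coeff (n - i)) = 2 * sqrt_coeff n - (if n = 1 then 1 else 0)"
proof -
  consider "n = 0" | "n = 1" | "n \<ge> 2" by linarith
  then show ?thesis
  proof cases
    case 3
    have "{..n} = insert 0 (insert n {1..<n})" using 3 by auto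
    then have "(\<Sum>i\<le>n. sqrt_coeff i * sqrt_coeff (n - i))
        = (\<Sum>i\<in>{1..<n}. sqrt_coeff i * sqrt_coeff (n - i))"
      using 3 by simp
    also have "\<dots> = 2 * sqrt_coeff n" using 3 by (subst (2) sqrt_coeff.simps) simp
    finally show ?thesis using 3 by simp
  qed (auto simp: atMost_Suc sqrt_coeff.simps)
qed

lemma sqrt_coeff_triangle_sum:
  "(\<Sum>(i,j)\<in>{(i,j). i + j < N}. sqrt_coeff i * sqrt_coeff j)
     = 2 * sqrt_coeff_sum N - (if N \<ge> 2 then 1 else 0)"
proof -
  have "(\<Sum>(i,j)\<in>{(i,j). i + j < N}. sqrt_coeff i * sqrt_coeff j)
      = (\<Sum>n<N. \<Sum>i\<le>n. sqrt_coeff i * sqrt_coeff (n - i))"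
    by (rule sum.triangle_reindex)
  also have "\<dots> = (\<Sum>n<N. 2 * sqrt_coeff n - (if n = 1 then 1 else 0))"
    by (simp add: sqrt_coeff_convolution)
  also have "\<dots> = 2 * sqrt_coeff_sum N - (if N \<ge> 2 then 1 else 0)"
    by (simp add: sum_subtractf sqrt_coeff_sum_def sum_distrib_left sum.delta)
  finally show ?thesis .
qed

lemma power2_sqrt_coeff_sum:
  "(sqrt_coeff_sum N)\<^sup>2 = (\<Sum>(i,j)\<in>{..<N} \<times> {..<N}. sqrt_coeff i * sqrt_coeff j)"
  by (simp add: sqrt_coeff_sum_def power2_eq_square sum_product sum.cartesian_product)

lemma triangle_subset_square: "{(i,j). i + j < N} \<subseteq> {..<N} \<times> {..<(N::nat)}"
  by auto

lemma sqrt_coeff_sum_le_1: "sqrt_coeff_sum N \<le> 1"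
proof (induction N)
  case (Suc N)
  show ?case
  proof (cases "N = 0")
    case False
    \<comment> \<open>the terms of the triangle of size \<open>N + 1\<close> outside the square of size \<open>N\<close> vanish\<close>
    have "(\<Sum>(i,j)\<in>{(i,j). i + j < Suc N}. sqrt_coeff i * sqrt_coeff j)
        = (\<Sum>(i,j)\<in>{(i,j). i + j < Suc N} \<inter> ({..<N} \<times> {..<N}). sqrt_coeff i * sqrt_coeff j)"
    proof (rule sum.mono_neutral_right)
      show "finite {(i,j). i + j < Suc N}" by (rule finite_subset[OF triangle_subset_square]) auto
      show "\<forall>p\<in>{(i,j). i + j < Suc N} - {(i,j). i + j < Suc N} \<inter> ({..<N} \<times> {..<N}).
          (case p of (i, j) \<Rightarrow> sqrt_coeff i * sqrt_coeff j) = 0"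
      proof
        fix p assume "p \<in> {(i,j). i + j < Suc N} - {(i,j). i + j < Suc N} \<inter> ({..<N} \<times> {..<N})"
        then obtain a b where "p = (a,b)" "a = 0 \<or> b = 0" by fastforce
        then show "(case p of (i, j) \<Rightarrow> sqrt_coeff i * sqrt_coeff j) = 0" by auto
      qed
    qed auto
    also have "\<dots> \<le> (\<Sum>(i,j)\<in>{..<N} \<times> {..<N}. sqrt_coeff i * sqrt_coeff j)"
      by (rule sum_mono2) (auto intro: mult_nonneg_nonneg sqrt_coeff_nonneg)
    also have "\<dots> \<le> 1"
      using Suc sum_nonneg[of "{..<N}" sqrt_coeff] sqrt_coeff_nonneg
      by (simp add: power2_sqrt_coeff_sum[symmetric] power_le_one sqrt_coeff_sum_def)
    finally show ?thesis using False by (simp add: sqrt_coeff_triangle_sum)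
  qed (simp add: sqrt_coeff_sum_def sqrt_coeff.simps)
qed (simp add: sqrt_coeff_sum_def)

lemma summable_sqrt_coeff: "summable sqrt_coeff"
  by (rule summableI_nonneg_bounded[where x=1])
    (auto simp: sqrt_coeff_nonneg sqrt_coeff_sum_le_1[unfolded sqrt_coeff_sum_def])

lemma suminf_sqrt_coeff: "suminf sqrt_coeff = 1"
proof -
  define S where "S = suminf sqrt_coeff"
  have "(sqrt_coeff_sum h)\<^sup>2 \<le> 2 * S - 1" if "h \<ge> 1" for h
  proof -
    have "(sqrt_coeff_sum h)\<^sup>2 \<le> (\<Sum>(i,j)\<in>{(i,j). i + j < 2 * h}. sqrt_coeff i * sqrt_coeff j)"
      unfolding power2_sqrt_coeff_sum
      by (rule sum_mono2) (auto intro: mult_nonneg_nonneg sqrt_coeff_nonneg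
          finite_subset[OF triangle_subset_square])
    also have "\<dots> = 2 * sqrt_coeff_sum (2 * h) - 1" using that by (simp add: sqrt_coeff_triangle_sum)
    also have "\<dots> \<le> 2 * S - 1"
      unfolding sqrt_coeff_sum_def S_def
      using sum_le_suminf[OF summable_sqrt_coeff] sqrt_coeff_nonneg by auto
    finally show ?thesis .
  qed
  moreover have "(\<lambda>h. (sqrt_coeff_sum h)\<^sup>2) \<longlonglongrightarrow> S\<^sup>2"
    unfolding sqrt_coeff_sum_def S_def
    by (intro tendsto_intros summable_LIMSEQ[OF summable_sqrt_coeff])
  ultimately have "S\<^sup>2 \<le> 2 * S - 1"
    by (intro LIMSEQ_le_const2[of "\<lambda>h. (sqrt_coeff_sum h)\<^sup>2"]) auto
  then have "(S - 1)\<^sup>2 \<le> 0" by (simp add: power2_eq_square algebra_simps)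
  then show ?thesis unfolding S_def by simp
qed

lemma sqrt_coeff_sum_tendsto_1: "sqrt_coeff_sum \<longlonglongrightarrow> 1"
  using summable_LIMSEQ[OF summable_sqrt_coeff] suminf_sqrt_coeff
  unfolding sqrt_coeff_sum_def by simp

lemma sqrt_coeff_square_minus_triangle:
  assumes "N \<ge> 2"
  shows "(\<Sum>(i,j)\<in>({..<N} \<times> {..<N}) - {(i,j). i + j < N}. sqrt_coeff i * sqrt_coeff j)
    = (1 - sqrt_coeff_sum N)\<^sup>2"
proof -
  have "(\<Sum>(i,j)\<in>({..<N} \<times> {..<N}) - {(i,j). i + j < N}. sqrt_coeff i * sqrt_coeff j)
      = (\<Sum>(i,j)\<in>{..<N} \<times> {..<N}. sqrt_coeff i * sqrt_coeff j)
        - (\<Sum>(i,j)\<in>{(i,j). i + j < N}. sqrt_coeff i * sqrt_coeff j)"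
    by (rule sum_diff) (auto intro: triangle_subset_square[THEN subsetD])
  also have "\<dots> = (1 - sqrt_coeff_sum N)\<^sup>2"
    using assms by (simp add: power2_sqrt_coeff_sum[symmetric] sqrt_coeff_triangle_sum
        power2_eq_square algebra_simps)
  finally show ?thesis .
qed

instance chilbert_space \<subseteq> banach ..

text \<open>For positive \<open>A\<close> and \<open>K = \<parallel>A\<parallel> + 1\<close>, the operator \<open>Q = I - A / K\<close> satisfies \<open>0 \<le> Q \<le> I\<close>, so
\<open>F = (\<Sum>k. c k Q ^ k)\<close> converges and \<open>(I - F)\<^sup>2 = I - Q = A / K\<close>: the square root of \<open>A\<close> is
\<open>sqrt K (I - F)\<close>.\<close>

definition sqrt_base :: "('a::complex_inner \<Rightarrow> 'a) \<Rightarrow> 'a \<Rightarrow> 'a" where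
  "sqrt_base A = (\<lambda>x. x - (1 / (onorm A + 1)) *\<^sub>R A x)"

definition sqrt_partial :: "('a::complex_inner \<Rightarrow> 'a) \<Rightarrow> nat \<Rightarrow> 'a \<Rightarrow> 'a" where
  "sqrt_partial A N = (\<lambda>x. \<Sum>k<N. sqrt_coeff k *\<^sub>R (sqrt_base A ^^ k) x)"

definition sqrt_series :: "('a::complex_inner \<Rightarrow> 'a) \<Rightarrow> 'a \<Rightarrow> 'a" where
  "sqrt_series A = (\<lambda>x. \<Sum>k. sqrt_coeff k *\<^sub>R (sqrt_base A ^^ k) x)"

context
  fixes A :: "'a::chilbert_space \<Rightarrow> 'a"
  assumes A: "opos A"
begin

private abbreviation (input) "Q \<equiv> sqrt_base A"

lemma cinner_sqrt_base:
  "cinner (Q x) x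
    = complex_of_real ((norm x)\<^sup>2) - complex_of_real (1 / (onorm A + 1)) * cinner (A x) x"
  unfolding sqrt_base_def by (simp add: cinner_diff_left cinner_scaleR_left cinner_self)

lemma opos_sqrt_base: "opos Q"
  unfolding opos_def
proof (intro conjI allI)
  have "cbounded A" using A by (rule opos_cbounded)
  then show "cbounded Q"
    unfolding sqrt_base_def by (intro cbounded_diff cbounded_ident cbounded_scaleR)
  fix x
  show "Im (cinner (Q x) x) = 0" using opos_Im[OF A, of x] by (simp add: cinner_sqrt_base)
  have "Re (cinner (A x) x) \<le> onorm A * (norm x)\<^sup>2" by (rule Re_cinner_le_onorm[OF \<open>cbounded A\<close>])
  also have "\<dots> \<le> (onorm A + 1) * (norm x)\<^sup>2" by (simp add: algebra_simps)
  finally show "0 \<le> Re (cinner (Q x) x)"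
    using cbounded_onorm_nonneg[OF \<open>cbounded A\<close>]
    by (simp add: cinner_sqrt_base divide_le_eq mult.commute)
qed

lemma cbounded_sqrt_base_funpow: "cbounded (Q ^^ k)"
  using cbounded_funpow[OF opos_cbounded[OF opos_sqrt_base]] .

lemma norm_sqrt_base_funpow_le: "norm ((Q ^^ k) x) \<le> norm x"
proof -
  have "Re (cinner (Q y) y) \<le> (norm y)\<^sup>2" for y
    using opos_Re[OF A, of y] cbounded_onorm_nonneg[OF opos_cbounded[OF A]]
    by (simp add: cinner_sqrt_base)
  then have "norm (Q x) \<le> norm x" for x by (rule opos_norm_le[OF opos_sqrt_base])
  then show ?thesis by (induction k) (auto intro: order_trans)
qed

lemma sqrt_base_funpow_selfadjoint: "cinner ((Q ^^ k) x) y = cinner x ((Q ^^ k) y)"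
proof (induction k arbitrary: y)
  case (Suc k)
  have "cinner ((Q ^^ Suc k) x) y = cinner ((Q ^^ k) x) (Q y)"
    using opos_selfadjoint[OF opos_sqrt_base] by simp
  also have "\<dots> = cinner x ((Q ^^ Suc k) y)" by (simp add: Suc funpow_swap1)
  finally show ?case .
qed simp

lemma sqrt_base_funpow_commute:
  assumes U: "cbounded U" and UA: "\<And>x. U (A x) = A (U x)"
  shows "U ((Q ^^ k) x) = (Q ^^ k) (U x)"
proof (induction k)
  case (Suc k)
  have "U (Q y) = Q (U y)" for y
    unfolding sqrt_base_def by (simp add: cbounded_apply_diff[OF U] cbounded_apply_scaleR[OF U] UA)
  then show ?case using Suc by simp
qed simp

lemma summable_sqrt_series: "summable (\<lambda>k. sqrt_coeff k *\<^sub>R (Q ^^ k) x)"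
  and norm_sqrt_series_le: "norm (sqrt_series A x) \<le> norm x"
proof -
  have bound: "norm (sqrt_coeff k *\<^sub>R (Q ^^ k) x) \<le> sqrt_coeff k * norm x" for k
    using norm_sqrt_base_funpow_le[of k x] sqrt_coeff_nonneg[of k] by (simp add: mult_left_mono)
  have norms_summable: "summable (\<lambda>k. norm (sqrt_coeff k *\<^sub>R (Q ^^ k) x))"
    by (rule summable_comparison_test'[OF summable_mult2[OF summable_sqrt_coeff]])
      (use bound in auto)
  then show "summable (\<lambda>k. sqrt_coeff k *\<^sub>R (Q ^^ k) x)" by (rule summable_norm_cancel)
  have "norm (sqrt_series A x) \<le> (\<Sum>k. norm (sqrt_coeff k *\<^sub>R (Q ^^ k) x))"
    unfolding sqrt_series_def by (rule summable_norm[OF norms_summable])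
  also have "\<dots> \<le> (\<Sum>k. sqrt_coeff k * norm x)"
    by (rule suminf_le[OF bound norms_summable summable_mult2[OF summable_sqrt_coeff]])
  also have "\<dots> = norm x"
    by (simp add: suminf_mult2[OF summable_sqrt_coeff, symmetric] suminf_sqrt_coeff)
  finally show "norm (sqrt_series A x) \<le> norm x" .
qed

lemma cbounded_sqrt_series: "cbounded (sqrt_series A)"
proof (rule cboundedI[where K=1])
  show "sqrt_series A (x + y) = sqrt_series A x + sqrt_series A y" for x y
    unfolding sqrt_series_def
    by (simp add: cbounded_apply_add[OF cbounded_sqrt_base_funpow] scaleR_add_right
        suminf_add[OF summable_sqrt_series summable_sqrt_series])
  show "sqrt_series A (c *\<^sub>C x) = c *\<^sub>C sqrt_series A x" for c x
  proof -
    have "sqrt_coeff k *\<^sub>R (Q ^^ k) (c *\<^sub>C x) = c *\<^sub>C (sqrt_coeff k *\<^sub>R (Q ^^ k) x)" for k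
      by (simp add: cbounded_apply_scaleC[OF cbounded_sqrt_base_funpow] scaleR_scaleC scaleC_scaleC
          mult.commute)
    then show ?thesis
      unfolding sqrt_series_def
      by (simp add: bounded_linear.suminf[OF bounded_linear_scaleC summable_sqrt_series])
  qed
qed (simp add: norm_sqrt_series_le)

lemma sqrt_series_commute:
  assumes U: "cbounded U" and UA: "\<And>x. U (A x) = A (U x)"
  shows "U (sqrt_series A x) = sqrt_series A (U x)"
  unfolding sqrt_series_def
  by (simp add: bounded_linear.suminf[OF cbounded_bounded_linear[OF U] summable_sqrt_series]
      cbounded_apply_scaleR[OF U] sqrt_base_funpow_commute[OF U UA])

lemma opos_ident_minus_sqrt_series: "opos (\<lambda>x. x - sqrt_series A x)"
  unfolding opos_def
proof (intro conjI allI)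
  show "cbounded (\<lambda>x. x - sqrt_series A x)"
    by (intro cbounded_diff cbounded_ident cbounded_sqrt_series)
  fix x
  let ?v = "\<lambda>k. sqrt_coeff k *\<^sub>R (Q ^^ k) x"
  have summable: "summable (\<lambda>k. cinner (?v k) x)"
    by (rule bounded_linear.summable[OF bounded_linear_cinner_left summable_sqrt_series])
  have series: "cinner (sqrt_series A x) x = (\<Sum>k. cinner (?v k) x)"
    unfolding sqrt_series_def
    by (rule bounded_linear.suminf[OF bounded_linear_cinner_left summable_sqrt_series])
  have "Im (cinner ((Q ^^ k) x) x) = 0" for k
    using sqrt_base_funpow_selfadjoint[of k x x] cinner_commute[of x "(Q ^^ k) x"]
    by (metis Reals_cnj_iff complex_is_Real_iff)
  moreover have "Im (\<Sum>k. cinner (?v k) x) = (\<Sum>k. Im (cinner (?v k) x))"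
    by (rule bounded_linear.suminf[OF bounded_linear_Im summable])
  ultimately have "Im (\<Sum>k. cinner (?v k) x) = 0" by (simp add: cinner_scaleR_left)
  then show "Im (cinner (x - sqrt_series A x) x) = 0"
    by (simp add: cinner_diff_left cinner_self series)
  have "Re (cinner ((Q ^^ k) x) x) \<le> (norm x)\<^sup>2" for k
    using complex_Re_le_cmod[of "cinner ((Q ^^ k) x) x"] cinner_cauchy_schwarz[of "(Q ^^ k) x" x]
      mult_right_mono[OF norm_sqrt_base_funpow_le[of k x] norm_ge_zero, of x]
    by (simp add: power2_eq_square)
  then have "(\<Sum>k. Re (cinner (?v k) x)) \<le> (\<Sum>k. sqrt_coeff k * (norm x)\<^sup>2)"
    by (intro suminf_le bounded_linear.summable[OF bounded_linear_Re summable]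
        summable_mult2[OF summable_sqrt_coeff])
      (simp add: cinner_scaleR_left sqrt_coeff_nonneg mult_left_mono)
  moreover have "Re (\<Sum>k. cinner (?v k) x) = (\<Sum>k. Re (cinner (?v k) x))"
    by (rule bounded_linear.suminf[OF bounded_linear_Re summable])
  ultimately have "Re (\<Sum>k. cinner (?v k) x) \<le> (\<Sum>k. sqrt_coeff k * (norm x)\<^sup>2)" by simp
  then show "0 \<le> Re (cinner (x - sqrt_series A x) x)"
    by (simp add: cinner_diff_left cinner_self series suminf_mult2[OF summable_sqrt_coeff, symmetric]
        suminf_sqrt_coeff)
qed


lemma sqrt_partial_tendsto: "(\<lambda>N. sqrt_partial A N x) \<longlonglongrightarrow> sqrt_series A x"
  unfolding sqrt_partial_def sqrt_series_def by (rule summable_LIMSEQ[OF summable_sqrt_series])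

lemma sqrt_partial_diff: "sqrt_partial A N (x - y) = sqrt_partial A N x - sqrt_partial A N y"
  unfolding sqrt_partial_def
  by (simp add: cbounded_apply_diff[OF cbounded_sqrt_base_funpow] scaleR_diff_right sum_subtractf)

lemma norm_sqrt_partial_le: "norm (sqrt_partial A N x) \<le> norm x"
proof -
  have "norm (sqrt_partial A N x) \<le> (\<Sum>k<N. sqrt_coeff k * norm x)"
    unfolding sqrt_partial_def
    by (rule order_trans[OF norm_sum sum_mono])
      (simp add: sqrt_coeff_nonneg norm_sqrt_base_funpow_le mult_left_mono)
  also have "\<dots> = sqrt_coeff_sum N * norm x" by (simp add: sqrt_coeff_sum_def sum_distrib_right)
  also have "\<dots> \<le> norm x"
    using sqrt_coeff_sum_le_1[of N] sum_nonneg[of "{..<N}" sqrt_coeff] sqrt_coeff_nonneg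
    by (simp add: mult_left_le_one_le sqrt_coeff_sum_def)
  finally show ?thesis .
qed

text \<open>Squaring the partial sums: the terms \<open>c i c j Q^(i+j)\<close> with \<open>i + j < N\<close> recombine by the
recursion of the coefficients; the remaining ones are bounded by \<open>(1 - \<Sum>k<N. c k)\<^sup>2\<close>.\<close>

lemma ident_minus_sqrt_partial_square:
  assumes "N \<ge> 2"
  shows "(x - sqrt_partial A N x) - sqrt_partial A N (x - sqrt_partial A N x) = (x - Q x) +
     (\<Sum>(i,j)\<in>({..<N} \<times> {..<N}) - {(i,j). i + j < N}.
        (sqrt_coeff i * sqrt_coeff j) *\<^sub>R (Q ^^ (i + j)) x)"
proof -
  let ?w = "\<lambda>(i,j). (sqrt_coeff i * sqrt_coeff j) *\<^sub>R (Q ^^ (i + j)) x"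
  have "(\<Sum>p\<in>{(i,j). i + j < N}. ?w p)
      = (\<Sum>n<N. \<Sum>i\<le>n. (sqrt_coeff i * sqrt_coeff (n - i)) *\<^sub>R (Q ^^ (i + (n - i))) x)"
    by (simp add: sum.triangle_reindex)
  also have "\<dots> = (\<Sum>n<N. (2 * sqrt_coeff n) *\<^sub>R (Q ^^ n) x - (if n = 1 then Q x else 0))"
    by (intro sum.cong refl)
      (simp add: scaleR_sum_left[symmetric] sqrt_coeff_convolution scaleR_diff_left)
  also have "\<dots> = 2 *\<^sub>R sqrt_partial A N x - Q x"
    using assms unfolding sqrt_partial_def by (simp add: sum_subtractf scaleR_sum_right sum.delta)
  finally have triangle: "(\<Sum>p\<in>{(i,j). i + j < N}. ?w p) = 2 *\<^sub>R sqrt_partial A N x - Q x" .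
  have "sqrt_partial A N (sqrt_partial A N x) = (\<Sum>p\<in>{..<N} \<times> {..<N}. ?w p)"
    unfolding sqrt_partial_def
    by (simp add: cbounded_apply_sum[OF cbounded_sqrt_base_funpow]
        cbounded_apply_scaleR[OF cbounded_sqrt_base_funpow] scaleR_sum_right funpow_add
        sum.cartesian_product)
  also have "\<dots> = (\<Sum>p\<in>({..<N} \<times> {..<N}) - {(i,j). i + j < N}. ?w p) + (\<Sum>p\<in>{(i,j). i + j < N}. ?w p)"
    by (rule sum.subset_diff[OF triangle_subset_square]) auto
  finally show ?thesis by (simp add: triangle sqrt_partial_diff scaleR_2 algebra_simps)
qed

lemma norm_sqrt_partial_square_remainder:
  assumes "N \<ge> 2"
  shows "norm (\<Sum>(i,j)\<in>({..<N} \<times> {..<N}) - {(i,j). i + j < N}.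
      (sqrt_coeff i * sqrt_coeff j) *\<^sub>R (Q ^^ (i + j)) x) \<le> (1 - sqrt_coeff_sum N)\<^sup>2 * norm x"
proof -
  have "norm (\<Sum>(i,j)\<in>({..<N} \<times> {..<N}) - {(i,j). i + j < N}.
      (sqrt_coeff i * sqrt_coeff j) *\<^sub>R (Q ^^ (i + j)) x)
    \<le> (\<Sum>(i,j)\<in>({..<N} \<times> {..<N}) - {(i,j). i + j < N}. (sqrt_coeff i * sqrt_coeff j) * norm x)"
    by (rule order_trans[OF norm_sum sum_mono])
      (auto simp: sqrt_coeff_nonneg norm_sqrt_base_funpow_le mult_left_mono)
  also have "\<dots> = (1 - sqrt_coeff_sum N)\<^sup>2 * norm x"
    by (simp add: sum_distrib_right[symmetric] case_prod_unfold
        sqrt_coeff_square_minus_triangle[OF assms, unfolded case_prod_unfold])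
  finally show ?thesis .
qed

lemma ident_minus_sqrt_series_square:
  "(x - sqrt_series A x) - sqrt_series A (x - sqrt_series A x) = x - Q x"
proof -
  define P where "P N y = y - sqrt_partial A N y" for N y
  have P_tendsto: "(\<lambda>N. P N y) \<longlonglongrightarrow> y - sqrt_series A y" for y
    unfolding P_def by (intro tendsto_intros sqrt_partial_tendsto)
  have P_diff: "P N y - P N z = P N (y - z)" for N y z
    unfolding P_def by (simp add: sqrt_partial_diff)
  have norm_P: "norm (P N y) \<le> 2 * norm y" for N y
    unfolding P_def
    using norm_triangle_ineq4[of y "sqrt_partial A N y"] norm_sqrt_partial_le[of N y] by simp
  have square_tendsto: "(\<lambda>N. P N (P N x)) \<longlonglongrightarrow> x - Q x"
  proof (rule LIM_zero_cancel, rule Lim_null_comparison)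
    show "\<forall>\<^sub>F N in sequentially. norm (P N (P N x) - (x - Q x)) \<le> (1 - sqrt_coeff_sum N)\<^sup>2 * norm x"
    proof (rule eventually_mono[OF eventually_ge_at_top[of 2]])
      fix N :: nat assume "2 \<le> N"
      show "norm (P N (P N x) - (x - Q x)) \<le> (1 - sqrt_coeff_sum N)\<^sup>2 * norm x"
        using norm_sqrt_partial_square_remainder[OF \<open>2 \<le> N\<close>, of x]
        unfolding P_def ident_minus_sqrt_partial_square[OF \<open>2 \<le> N\<close>] by simp
    qed
    have "(\<lambda>N. (1 - sqrt_coeff_sum N)\<^sup>2 * norm x) \<longlonglongrightarrow> (1 - 1)\<^sup>2 * norm x"
      by (intro tendsto_intros sqrt_coeff_sum_tendsto_1)
    then show "(\<lambda>N. (1 - sqrt_coeff_sum N)\<^sup>2 * norm x) \<longlonglongrightarrow> 0" by simp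
  qed
  have "(\<lambda>N. P N (P N x)) \<longlonglongrightarrow> (x - sqrt_series A x) - sqrt_series A (x - sqrt_series A x)"
  proof -
    \<comment> \<open>the \<open>P N\<close> are uniformly bounded, so they may be applied to the converging \<open>P N x\<close>\<close>
    have "(\<lambda>N. P N x - (x - sqrt_series A x)) \<longlonglongrightarrow> 0" using P_tendsto[of x] by (rule LIM_zero)
    then have bound_tendsto: "(\<lambda>N. 2 * norm (P N x - (x - sqrt_series A x))) \<longlonglongrightarrow> 0"
      using tendsto_mult_right_zero tendsto_norm_zero by blast
    have "norm (P N (P N x) - P N (x - sqrt_series A x))
        \<le> 2 * norm (P N x - (x - sqrt_series A x))" for N
      unfolding P_diff by (rule norm_P)
    from Lim_null_comparison[OF always_eventually[OF allI[OF this]] bound_tendsto]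
    have "(\<lambda>N. P N (P N x) - P N (x - sqrt_series A x)) \<longlonglongrightarrow> 0" .
    from tendsto_add[OF P_tendsto[of "x - sqrt_series A x"] this] show ?thesis by simp
  qed
  from LIMSEQ_unique[OF this square_tendsto] show ?thesis .
qed


lemma opos_sqrt_witness: "opos (\<lambda>x. sqrt (onorm A + 1) *\<^sub>R (x - sqrt_series A x))"
  using opos_ident_minus_sqrt_series
    cbounded_scaleR[OF opos_cbounded[OF opos_ident_minus_sqrt_series]]
    cbounded_onorm_nonneg[OF opos_cbounded[OF A]]
  by (simp add: opos_def cinner_scaleR_left)

lemma sqrt_witness_square:
  "sqrt (onorm A + 1) *\<^sub>R (sqrt (onorm A + 1) *\<^sub>R (x - sqrt_series A x)
     - sqrt_series A (sqrt (onorm A + 1) *\<^sub>R (x - sqrt_series A x))) = A x"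
proof -
  have "0 < onorm A + 1" using cbounded_onorm_nonneg[OF opos_cbounded[OF A]] by simp
  then show ?thesis
    using ident_minus_sqrt_series_square[of x]
    by (simp add: cbounded_apply_scaleR[OF cbounded_sqrt_series] sqrt_base_def
        scaleR_diff_right[symmetric])
qed

end

lemma opos_commuting_square_roots_eq:
  fixes B C :: "'a::complex_inner \<Rightarrow> 'a"
  assumes B: "opos B" and C: "opos C"
    and square: "\<And>x. B (B x) = C (C x)" and commute: "\<And>x. B (C x) = C (B x)"
  shows "B = C"
proof
  fix x
  define y where "y = B x - C x"
  have B_bounded: "cbounded B" and C_bounded: "cbounded C" using B C by (simp_all add: opos_cbounded)
  have "B y + C y = B (B x) - C (C x) + (C (B x) - B (C x))"
    unfolding y_def by (simp add: cbounded_apply_diff[OF B_bounded] cbounded_apply_diff[OF C_bounded])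
  also have "\<dots> = 0" by (simp add: square commute)
  finally have "Re (cinner (B y) y) + Re (cinner (C y) y) = 0"
    by (metis cinner_add_left cinner_zero_left plus_complex.sel(1) zero_complex.sel(1))
  then have "B y = 0" "C y = 0"
    using opos_apply_eq_0[OF B, of y] opos_apply_eq_0[OF C, of y]
      opos_Re[OF B, of y] opos_Re[OF C, of y]
    by linarith+
  moreover have "cinner (B x - C x) y = cinner x (B y) - cinner x (C y)"
    by (simp add: cinner_diff_left opos_selfadjoint[OF B] opos_selfadjoint[OF C])
  ultimately have "cinner y y = 0" by (simp add: y_def[symmetric])
  then show "B x = C x" using cinner_self_eq_zero[of y] by (simp add: y_def)
qed

lemma sqrt_witness_commute:
  fixes A :: "'a::chilbert_space \<Rightarrow> 'a"
  assumes "opos A" and U: "cbounded U" and UA: "\<And>x. U (A x) = A (U x)"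
  shows "U (sqrt (onorm A + 1) *\<^sub>R (x - sqrt_series A x))
    = sqrt (onorm A + 1) *\<^sub>R (U x - sqrt_series A (U x))"
  by (simp add: cbounded_apply_scaleR[OF U] cbounded_apply_diff[OF U] sqrt_series_commute[OF assms])

lemma op_sqrt_eq:
  fixes A :: "'a::chilbert_space \<Rightarrow> 'a"
  assumes A: "opos A"
  shows "op_sqrt A = (\<lambda>x. sqrt (onorm A + 1) *\<^sub>R (x - sqrt_series A x))"
  unfolding op_sqrt_def
proof (rule the_equality)
  show "opos (\<lambda>x. sqrt (onorm A + 1) *\<^sub>R (x - sqrt_series A x)) \<and>
      (\<forall>x. sqrt (onorm A + 1) *\<^sub>R (sqrt (onorm A + 1) *\<^sub>R (x - sqrt_series A x)
        - sqrt_series A (sqrt (onorm A + 1) *\<^sub>R (x - sqrt_series A x))) = A x)"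
    using opos_sqrt_witness[OF A] sqrt_witness_square[OF A] by blast
  fix B assume "opos B \<and> (\<forall>x. B (B x) = A x)"
  then have B: "opos B" and BB: "\<And>x. B (B x) = A x" by auto
  have "B (A x) = A (B x)" for x by (simp flip: BB)
  then show "B = (\<lambda>x. sqrt (onorm A + 1) *\<^sub>R (x - sqrt_series A x))"
    by (intro opos_commuting_square_roots_eq[OF B opos_sqrt_witness[OF A]])
      (simp_all add: BB sqrt_witness_square[OF A] sqrt_witness_commute[OF A opos_cbounded[OF B]])
qed

lemma opos_op_sqrt: "opos (A::'a::chilbert_space \<Rightarrow> 'a) \<Longrightarrow> opos (op_sqrt A)"
  by (simp add: op_sqrt_eq opos_sqrt_witness)

lemma op_sqrt_square: "opos (A::'a::chilbert_space \<Rightarrow> 'a) \<Longrightarrow> op_sqrt A (op_sqrt A x) = A x"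
  by (simp add: op_sqrt_eq sqrt_witness_square)

lemma op_sqrt_commute:
  "opos (A::'a::chilbert_space \<Rightarrow> 'a) \<Longrightarrow> cbounded U \<Longrightarrow> (\<And>x. U (A x) = A (U x))
    \<Longrightarrow> U (op_sqrt A x) = op_sqrt A (U x)"
  by (simp add: op_sqrt_eq sqrt_witness_commute)

lemma csubspace_range: "cbounded A \<Longrightarrow> csubspace (range A)"
  unfolding csubspace_def
  by (auto simp: cbounded_apply_add[symmetric] cbounded_apply_scaleC[symmetric]
      intro!: image_eqI[of _ A 0] rangeI)

lemma csubspace_kernel: "cbounded A \<Longrightarrow> csubspace {y. A y = 0}"
  unfolding csubspace_def by (auto simp: cbounded_apply_add cbounded_apply_scaleC)

lemma csubspace_closure:
  fixes S :: "'a::complex_inner set"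
  assumes "csubspace S" shows "csubspace (closure S)"
  unfolding csubspace_def
proof (intro conjI ballI allI)
  show "0 \<in> closure S" using csubspace_0[OF assms] closure_subset by blast
  fix x y assume "x \<in> closure S" "y \<in> closure S"
  then obtain f g where "\<And>n. f n \<in> S" "f \<longlonglongrightarrow> x" "\<And>n. g n \<in> S" "g \<longlonglongrightarrow> y"
    unfolding closure_sequential by blast
  then show "x + y \<in> closure S"
    unfolding closure_sequential using csubspace_add[OF assms]
    by (intro exI[where x="\<lambda>n. f n + g n"]) (auto intro: tendsto_add)
next
  fix c and x :: 'a assume "x \<in> closure S"
  then obtain f where "\<And>n. f n \<in> S" "f \<longlonglongrightarrow> x" unfolding closure_sequential by blast
  then show "c *\<^sub>C x \<in> closure S"
    unfolding closure_sequential using csubspace_scaleC[OF assms]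
    by (intro exI[where x="\<lambda>n. c *\<^sub>C f n"])
      (auto intro: bounded_linear.tendsto[OF bounded_linear_scaleC])
qed

context
  fixes A :: "'a::chilbert_space \<Rightarrow> 'a"
  assumes A: "cbounded A" and selfadjoint: "\<And>x y. cinner (A x) y = cinner x (A y)"
begin

private abbreviation (input) "P\<^sub>A \<equiv> proj (closure (range A))"

lemma csubspace_closure_range: "csubspace (closure (range A))"
  by (intro csubspace_closure csubspace_range A)

lemma cinner_closure_range_kernel:
  assumes "y \<in> closure (range A)" and "A n = 0"
  shows "cinner y n = 0"
proof -
  have "closure (range A) \<subseteq> {y. cinner y n = 0}"
  proof (rule closure_minimal)
    show "range A \<subseteq> {y. cinner y n = 0}" using selfadjoint assms(2) by auto
    show "closed {y. cinner y n = 0}"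
      by (intro closed_Collect_eq continuous_on_const linear_continuous_on
          bounded_linear_cinner_left)
  qed
  then show ?thesis using assms(1) by blast
qed

lemma apply_minus_proj_closure_range: "A (x - P\<^sub>A x) = 0"
proof (rule cinner_eq_0_imp_eq_0)
  fix w
  have "A w \<in> closure (range A)" by (rule closure_subset[THEN subsetD, OF rangeI])
  then have "cinner (x - P\<^sub>A x) (A w) = 0"
    by (rule proj_orthogonal[OF csubspace_closure_range closed_closure])
  then show "cinner (A (x - P\<^sub>A x)) w = 0" using selfadjoint[of "x - P\<^sub>A x" w] by simp
qed

lemma apply_proj_closure_range: "A (P\<^sub>A x) = A x"
  using apply_minus_proj_closure_range[of x] cbounded_apply_diff[OF A] by simp

lemma proj_closure_range_apply: "P\<^sub>A (A x) = A x"
  by (rule proj_ident[OF csubspace_closure_range closed_closure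
        closure_subset[THEN subsetD, OF rangeI]])

lemma proj_closure_range_kernel: "A n = 0 \<Longrightarrow> P\<^sub>A n = 0"
  by (rule proj_eq_0_of_orthogonal[OF csubspace_closure_range closed_closure])
    (metis cinner_closure_range_kernel cinner_commute complex_cnj_zero)

lemma closure_range_iff_orthogonal_kernel:
  "y \<in> closure (range A) \<longleftrightarrow> (\<forall>n. A n = 0 \<longrightarrow> cinner y n = 0)"
proof
  assume "\<forall>n. A n = 0 \<longrightarrow> cinner y n = 0"
  then have "cinner y (y - P\<^sub>A y) = 0" using apply_minus_proj_closure_range by blast
  moreover have "cinner (P\<^sub>A y) (y - P\<^sub>A y) = 0"
    by (rule proj_orthogonal'[OF csubspace_closure_range closed_closure
          proj_in[OF csubspace_closure_range closed_closure]])
  ultimately have "cinner (y - P\<^sub>A y) (y - P\<^sub>A y) = 0" by (simp add: cinner_diff_left)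
  then have "y = P\<^sub>A y" using cinner_self_eq_zero[of "y - P\<^sub>A y"] by simp
  then show "y \<in> closure (range A)"
    using proj_in[OF csubspace_closure_range closed_closure, of y] by simp
qed (use cinner_closure_range_kernel in blast)

end

lemma proj_kernel_eq_ident_minus_proj_closure_range:
  fixes A :: "'a::chilbert_space \<Rightarrow> 'a"
  assumes A: "cbounded A" and selfadjoint: "\<And>x y. cinner (A x) y = cinner x (A y)"
  shows "proj {y. A y = 0} z = z - proj (closure (range A)) z"
proof (rule proj_eqI[OF csubspace_kernel[OF A]])
  show "z - proj (closure (range A)) z \<in> {y. A y = 0}"
    using apply_minus_proj_closure_range[OF assms] by simp
  show "\<forall>y\<in>{y. A y = 0}. cinner (z - (z - proj (closure (range A)) z)) y = 0"
    using cinner_closure_range_kernel[OF assms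
        proj_in[OF csubspace_closure_range[OF assms] closed_closure]]
    by simp
qed

section \<open>Regularity as a commutation relation\<close>

lemma op_sqrt_eq_0_iff:
  fixes A :: "'a::chilbert_space \<Rightarrow> 'a"
  assumes A: "opos A"
  shows "op_sqrt A z = 0 \<longleftrightarrow> A z = 0"
proof
  assume "op_sqrt A z = 0"
  then show "A z = 0"
    using op_sqrt_square[OF A, of z] cbounded_apply_0[OF opos_cbounded[OF opos_op_sqrt[OF A]]]
    by simp
next
  assume "A z = 0"
  moreover have "cinner (op_sqrt A z) (op_sqrt A z) = cinner (A z) z"
    using opos_selfadjoint[OF opos_op_sqrt[OF A], of "op_sqrt A z" z] op_sqrt_square[OF A, of z]
    by simp
  ultimately show "op_sqrt A z = 0" using cinner_self_eq_zero[of "op_sqrt A z"] by simp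
qed

context
  fixes A :: "'a::chilbert_space \<Rightarrow> 'a"
  assumes A: "opos A"
begin

private abbreviation (input) "R \<equiv> op_sqrt A"
private abbreviation (input) "P \<equiv> proj (closure (range A))"

private lemma A_selfadjoint: "cinner (A x) y = cinner x (A y)"
  by (rule opos_selfadjoint[OF A])

private lemmas A_bounded = opos_cbounded[OF A]
private lemmas R_bounded = opos_cbounded[OF opos_op_sqrt[OF A]]
private lemmas P_bounded =
  cbounded_proj[OF csubspace_closure_range[OF A_bounded A_selfadjoint] closed_closure]

lemma op_sqrt_apply_proj: "R (P x) = R x"
proof -
  have "R (x - P x) = 0"
    using apply_minus_proj_closure_range[OF A_bounded A_selfadjoint] op_sqrt_eq_0_iff[OF A] by blast
  then show ?thesis using cbounded_apply_diff[OF R_bounded] by simp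
qed

lemma proj_op_sqrt_apply: "P (R x) = R x"
proof (rule proj_ident[OF csubspace_closure_range[OF A_bounded A_selfadjoint] closed_closure])
  show "R x \<in> closure (range A)"
    unfolding closure_range_iff_orthogonal_kernel[OF A_bounded A_selfadjoint]
    using op_sqrt_eq_0_iff[OF A] opos_selfadjoint[OF opos_op_sqrt[OF A], of x]
    by (metis cinner_zero_right)
qed

lemma regular_imp_apply_eq_proj:
  assumes W: "cbounded W" and "regular A W"
  shows "A (W x) = P (W (A x))"
proof -
  have reg: "A (W y) = R (W (R y))" for y using \<open>regular A W\<close> unfolding regular_def by simp
  have "R (W y) = P (W (R y))" for y
  proof -
    have "R (R (W y) - W (R y)) = 0"
      using reg cbounded_apply_diff[OF R_bounded] op_sqrt_square[OF A] by simp
    then have "P (R (W y) - W (R y)) = 0"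
      using op_sqrt_eq_0_iff[OF A] proj_closure_range_kernel[OF A_bounded A_selfadjoint] by blast
    then show ?thesis using cbounded_apply_diff[OF P_bounded] proj_op_sqrt_apply by simp
  qed
  then show ?thesis using reg op_sqrt_square[OF A] by simp
qed

lemma regular_if_apply_eq_proj:
  assumes W: "cbounded W" and kernel: "\<And>x. A x = 0 \<Longrightarrow> A (W x) = 0"
    and commute: "\<And>x. A (W x) = P (W (A x))"
  shows "regular A W"
  unfolding regular_def
proof
  fix x
  define U where "U = (\<lambda>y. P (W (P y)))"
  have U: "cbounded U"
    unfolding U_def by (rule cbounded_comp[OF P_bounded cbounded_comp[OF W P_bounded]])
  have AWP: "A (W (P y)) = A (W y)" for y
  proof -
    have "A (W (y - P y)) = 0"
      by (rule kernel[OF apply_minus_proj_closure_range[OF A_bounded A_selfadjoint]])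
    then show ?thesis by (simp add: cbounded_apply_diff[OF W] cbounded_apply_diff[OF A_bounded])
  qed
  \<comment> \<open>the compression \<open>U = P W P\<close> commutes with \<open>A\<close>, hence with its square root\<close>
  have "U (A y) = A (U y)" for y
    unfolding U_def
    by (simp add: proj_closure_range_apply[OF A_bounded A_selfadjoint] commute[symmetric]
        apply_proj_closure_range[OF A_bounded A_selfadjoint] AWP)
  then have "R (U (R x)) = U (A x)"
    by (simp add: op_sqrt_commute[OF A U, symmetric] op_sqrt_square[OF A])
  then show "A (W x) = R (W (R x))"
    unfolding U_def
    by (simp add: proj_op_sqrt_apply op_sqrt_apply_proj
        proj_closure_range_apply[OF A_bounded A_selfadjoint]
        commute)
qed

end

section \<open>Concave operators\<close>

context
  fixes a :: "nat \<Rightarrow> real"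
  assumes concave: "\<And>k. a (Suc (Suc k)) - a (Suc k) \<le> a (Suc k) - a k"
begin

lemma concave_seq_increment_antimono: "i \<le> j \<Longrightarrow> a (Suc j) - a j \<le> a (Suc i) - a i"
  by (induction j rule: dec_induct) (auto intro: order_trans[OF concave])

lemma concave_seq_add_le: "a (n + m) - a n \<le> a m - a 0"
proof (induction m)
  case (Suc m)
  have "a (Suc (n + m)) - a (n + m) \<le> a (Suc m) - a m"
    by (rule concave_seq_increment_antimono) simp
  then show ?case using Suc by simp
qed simp

lemma concave_seq_increment_nonneg:
  assumes nonneg: "\<And>k. 0 \<le> a k"
  shows "a k \<le> a (Suc k)"
proof (rule ccontr)
  define d where "d = a (Suc k) - a k"
  assume "\<not> a k \<le> a (Suc k)"
  then have "d < 0" unfolding d_def by simp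
  \<comment> \<open>a negative increment persists, so the sequence would eventually become negative\<close>
  have bound: "a (k + m) \<le> a k + real m * d" for m
  proof (induction m)
    case (Suc m)
    have "a (Suc (k + m)) - a (k + m) \<le> d"
      unfolding d_def by (rule concave_seq_increment_antimono) simp
    then show ?case using Suc by (simp add: algebra_simps)
  qed simp
  obtain m :: nat where "a k / (- d) < real m" using reals_Archimedean2 by blast
  then have "a k < real m * (- d)"
    using \<open>d < 0\<close> pos_divide_less_eq[of "- d" "a k" "real m"] by linarith
  then have "a k + real m * d < 0" by (simp add: algebra_simps)
  then show False using bound[of m] nonneg[of "k + m"] by simp
qed

lemma concave_seq_mono: "(\<And>k. 0 \<le> a k) \<Longrightarrow> i \<le> j \<Longrightarrow> a i \<le> a j"
  using lift_Suc_mono_le[of a] concave_seq_increment_nonneg by blast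

end

context
  fixes T :: "'a::chilbert_space \<Rightarrow> 'a"
  assumes T: "cbounded T"
begin

lemma cbounded_Delta: "cbounded (Delta T)"
  unfolding Delta_def by (intro cbounded_diff cbounded_comp[OF cbounded_adj[OF T] T] cbounded_ident)

lemma cinner_Delta: "cinner (Delta T x) y = cinner (T x) (T y) - cinner x y"
  unfolding Delta_def by (simp add: cinner_diff_left cinner_adj_left[OF T])

lemma Delta_selfadjoint: "cinner (Delta T x) y = cinner x (Delta T y)"
  unfolding cinner_Delta by (simp add: Delta_def cinner_diff_right cinner_adj_right[OF T])

lemma Re_cinner_Delta: "Re (cinner (Delta T x) x) = (norm (T x))\<^sup>2 - (norm x)\<^sup>2"
  by (simp add: cinner_Delta power2_norm_eq_cinner)

lemma concave_op_iff:
  "concave_op T \<longleftrightarrow> (\<forall>x. (norm (T (T x)))\<^sup>2 - 2 * (norm (T x))\<^sup>2 + (norm x)\<^sup>2 \<le> 0)"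
proof -
  let ?C = "\<lambda>x. - (adj T (adj T (T (T x))) - 2 *\<^sub>R adj T (T x) + x)"
  have adjT: "cbounded (adj T)" by (rule cbounded_adj[OF T])
  have "cbounded (\<lambda>x. adj T (adj T (T (T x))) - 2 *\<^sub>R adj T (T x) + x)"
    by (rule cbounded_add[OF cbounded_diff[OF
          cbounded_comp[OF adjT cbounded_comp[OF adjT cbounded_comp[OF T T]]]
          cbounded_scaleR[OF cbounded_comp[OF adjT T]]] cbounded_ident])
  from cbounded_scaleR[OF this, of "-1"] have "cbounded ?C" by simp
  moreover have form: "cinner (?C x) x
      = complex_of_real (- ((norm (T (T x)))\<^sup>2 - 2 * (norm (T x))\<^sup>2 + (norm x)\<^sup>2))" for x
    by (simp add: cinner_minus_left cinner_add_left cinner_diff_left cinner_scaleR_left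
        cinner_adj_left[OF T] cinner_self)
  ultimately show ?thesis unfolding concave_op_def opos_def form by (simp add: algebra_simps)
qed

lemma Delta_funpow_eq_sum:
  "Delta (T ^^ n) x = (\<Sum>k<n. adj (T ^^ k) (Delta T ((T ^^ k) x)))"
proof -
  have "(adj T ^^ n) ((T ^^ n) x) = x + (\<Sum>k<n. (adj T ^^ k) (Delta T ((T ^^ k) x)))"
  proof (induction n)
    case (Suc n)
    have "(adj T ^^ Suc n) ((T ^^ Suc n) x) = (adj T ^^ n) (adj T (T ((T ^^ n) x)))"
      by (simp add: funpow_swap1)
    also have "adj T (T ((T ^^ n) x)) = Delta T ((T ^^ n) x) + (T ^^ n) x"
      by (simp add: Delta_def)
    finally show ?case
      using Suc
      by (simp add: cbounded_apply_add[OF cbounded_funpow[OF cbounded_adj[OF T]]] algebra_simps)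
  qed simp
  then show ?thesis unfolding Delta_def adj_funpow[OF T] by simp
qed

end

context
  fixes T :: "'a::chilbert_space \<Rightarrow> 'a"
  assumes T: "cbounded T" and concave: "concave_op T"
begin

lemma concave_op_norm_funpow_concave:
  "(norm ((T ^^ Suc (Suc k)) x))\<^sup>2 - (norm ((T ^^ Suc k) x))\<^sup>2
     \<le> (norm ((T ^^ Suc k) x))\<^sup>2 - (norm ((T ^^ k) x))\<^sup>2"
  using concave[unfolded concave_op_iff[OF T], rule_format, of "(T ^^ k) x"] by simp

lemma concave_op_norm_funpow_mono: "i \<le> j \<Longrightarrow> (norm ((T ^^ i) x))\<^sup>2 \<le> (norm ((T ^^ j) x))\<^sup>2"
  by (rule concave_seq_mono[where a = "\<lambda>k. (norm ((T ^^ k) x))\<^sup>2",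
        OF concave_op_norm_funpow_concave])
    simp_all

lemma concave_op_funpow: "concave_op (T ^^ n)"
  unfolding concave_op_iff[OF cbounded_funpow[OF T]]
proof
  fix x
  show "(norm ((T ^^ n) ((T ^^ n) x)))\<^sup>2 - 2 * (norm ((T ^^ n) x))\<^sup>2 + (norm x)\<^sup>2 \<le> 0"
    using concave_seq_add_le[where a = "\<lambda>k. (norm ((T ^^ k) x))\<^sup>2", OF concave_op_norm_funpow_concave,
        of n n]
    by (simp add: funpow_add)
qed

lemma opos_Delta: "opos (Delta T)"
  using concave_op_norm_funpow_mono[of 0 1] cbounded_Delta[OF T] Re_cinner_Delta[OF T]
  unfolding opos_def by (simp add: cinner_Delta[OF T] cinner_self)

lemma Delta_kernel_invariant:
  assumes "Delta T x = 0"
  shows "Delta T (T x) = 0"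
proof (rule opos_apply_eq_0[OF opos_Delta])
  have "(norm (T x))\<^sup>2 = (norm x)\<^sup>2" using assms Re_cinner_Delta[OF T, of x] by simp
  then show "Re (cinner (Delta T (T x)) (T x)) \<le> 0"
    using concave unfolding concave_op_iff[OF T] Re_cinner_Delta[OF T] by (smt (verit))
qed

end

section \<open>Powers of regular concave operators\<close>

lemma commute_funpow: "(\<And>x. f (g x) = g (f x)) \<Longrightarrow> f ((g ^^ k) x) = (g ^^ k) (f x)"
  by (induction k) simp_all

context
  fixes T :: "'a::chilbert_space \<Rightarrow> 'a"
  assumes T: "cbounded T" and concave: "concave_op T"
begin

private abbreviation (input) "D \<equiv> Delta T"
private abbreviation (input) "P\<^sub>M \<equiv> proj (closure (range (Delta T)))"
private abbreviation (input) "C \<equiv> compression (closure (range (Delta T))) T"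

private lemmas D_bounded = cbounded_Delta[OF T]
private lemmas D_selfadjoint = Delta_selfadjoint[OF T]
private lemmas D_range = csubspace_closure_range[OF D_bounded D_selfadjoint] closed_closure
private lemmas PM_bounded = cbounded_proj[OF D_range]

lemma cbounded_compression_Delta: "cbounded C"
  unfolding compression_def by (rule cbounded_comp[OF PM_bounded cbounded_comp[OF T PM_bounded]])

lemma proj_apply_eq_compression: "P\<^sub>M (T x) = C x"
proof -
  have "D (T (x - P\<^sub>M x)) = 0"
    by (rule Delta_kernel_invariant[OF T concave
          apply_minus_proj_closure_range[OF D_bounded D_selfadjoint]])
  then have "P\<^sub>M (T (x - P\<^sub>M x)) = 0" by (rule proj_closure_range_kernel[OF D_bounded D_selfadjoint])
  then show ?thesis
    unfolding compression_def
    by (simp add: cbounded_apply_diff[OF T] cbounded_apply_diff[OF PM_bounded])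
qed

lemma compression_eq_0_if_isometric:
  assumes "\<sigma> > 0" and "\<sigma>\<^sup>2 = onorm D + 1"
    and isometric: "\<forall>x\<in>closure (range D). norm ((1 / \<sigma>) *\<^sub>R proj {y. D y = 0} (T x)) = norm x"
  shows "C = (\<lambda>x. 0)"
proof
  \<comment> \<open>\<open>\<parallel>T x\<parallel>\<^sup>2 \<le> \<sigma>\<^sup>2 \<parallel>x\<parallel>\<^sup>2\<close> leaves no room for a component of \<open>T x\<close> in \<open>closure (range D)\<close>\<close>
  have "P\<^sub>M (T x) = 0" if "x \<in> closure (range D)" for x
  proof -
    have "\<bar>1 / \<sigma>\<bar> * norm (T x - P\<^sub>M (T x)) = norm x"
      using isometric that
      unfolding proj_kernel_eq_ident_minus_proj_closure_range[OF D_bounded D_selfadjoint]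
        norm_scaleR
      by blast
    then have "norm (T x - P\<^sub>M (T x)) = \<sigma> * norm x" using \<open>\<sigma> > 0\<close> by (simp add: field_simps)
    moreover have "(norm (T x))\<^sup>2 \<le> (norm x)\<^sup>2 + onorm D * (norm x)\<^sup>2"
      using Re_cinner_le_onorm[OF D_bounded, of x] Re_cinner_Delta[OF T, of x] by simp
    ultimately have "(norm (P\<^sub>M (T x)))\<^sup>2 \<le> 0"
      using power2_norm_proj[OF D_range, of "T x"] \<open>\<sigma>\<^sup>2 = onorm D + 1\<close>
      by (simp add: power_mult_distrib algebra_simps)
    then show ?thesis by simp
  qed
  then show "C x = 0" for x
    unfolding compression_def using proj_in[OF D_range] by blast
qed

lemma regular_if_compression_eq_0:
  assumes "C = (\<lambda>x. 0)"
  shows "regular D T"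
proof (rule regular_if_apply_eq_proj[OF opos_Delta[OF T concave] T])
  show "D (T x) = 0" if "D x = 0" for x by (rule Delta_kernel_invariant[OF T concave that])
  show "D (T x) = P\<^sub>M (T (D x))" for x
  proof -
    have "D (T x) = D (P\<^sub>M (T x))"
      by (rule apply_proj_closure_range[OF D_bounded D_selfadjoint, symmetric])
    also have "\<dots> = 0"
      using assms by (simp add: proj_apply_eq_compression cbounded_apply_0[OF D_bounded])
    also have "\<dots> = P\<^sub>M (T (D x))" using assms by (simp add: proj_apply_eq_compression)
    finally show ?thesis .
  qed
qed

context
  assumes regular: "regular D T" and quasinormal: "quasinormal C"
begin

private abbreviation (input) "B \<equiv> (\<lambda>x. adj C (C x))"

private lemmas C_bounded = cbounded_compression_Delta
private lemmas adjC_bounded = cbounded_adj[OF cbounded_compression_Delta]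

lemma Delta_apply_eq_compression: "D (T x) = C (D x)"
  using regular_imp_apply_eq_proj[OF opos_Delta[OF T concave] T regular, of x]
  by (simp add: proj_apply_eq_compression)

lemma Delta_compression_commute: "D (C x) = C (D x)"
  using Delta_apply_eq_compression[of "P\<^sub>M x"]
  unfolding compression_def by (simp add: apply_proj_closure_range[OF D_bounded D_selfadjoint])

lemma Delta_adj_compression_commute: "D (adj C x) = adj C (D x)"
proof (rule cinner_ext_right)
  fix y
  have "cinner y (D (adj C x)) = cinner (C (D y)) x"
    by (simp add: D_selfadjoint[symmetric] cinner_adj_right[OF C_bounded])
  also have "\<dots> = cinner y (adj C (D x))"
    by (simp add: Delta_compression_commute[symmetric] D_selfadjoint cinner_adj_right[OF C_bounded])
  finally show "cinner y (D (adj C x)) = cinner y (adj C (D x))" .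
qed

lemma Delta_funpow_apply: "D ((T ^^ k) x) = (C ^^ k) (D x)"
  by (induction k) (simp_all add: Delta_apply_eq_compression)

lemma proj_funpow_apply: "P\<^sub>M ((T ^^ k) x) = (C ^^ k) (P\<^sub>M x)"
proof (induction k)
  case (Suc k)
  have "P\<^sub>M ((T ^^ Suc k) x) = C (P\<^sub>M ((T ^^ k) x))"
    using proj_apply_eq_compression unfolding compression_def by (simp add: proj_idem[OF D_range])
  then show ?case using Suc by simp
qed simp

lemma adj_funpow_Delta: "adj (T ^^ k) (D y) = D ((adj C ^^ k) y)"
proof (rule cinner_ext_right)
  fix z
  have "cinner z (adj (T ^^ k) (D y)) = cinner ((C ^^ k) (D z)) y"
    by (simp add: cinner_adj_right[OF cbounded_funpow[OF T], symmetric] D_selfadjoint[symmetric]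
        Delta_funpow_apply)
  also have "\<dots> = cinner z (D ((adj C ^^ k) y))"
    by (simp add: cinner_adj_right[OF cbounded_funpow[OF C_bounded]] adj_funpow[OF C_bounded]
        D_selfadjoint)
  finally show "cinner z (adj (T ^^ k) (D y)) = cinner z (D ((adj C ^^ k) y))" .
qed

lemma compression_commute_adj_compression: "C (B x) = B (C x)"
  using quasinormal unfolding quasinormal_def by blast

lemma adj_compression_funpow_compression: "(adj C ^^ k) ((C ^^ k) x) = (B ^^ k) x"
proof (induction k arbitrary: x)
  case (Suc k)
  have "(adj C ^^ Suc k) ((C ^^ Suc k) x) = adj C ((B ^^ k) (C x))"
    by (simp add: funpow_swap1 Suc)
  also have "\<dots> = (B ^^ Suc k) x"
    by (simp add: commute_funpow[of C B, OF compression_commute_adj_compression])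
  finally show ?case .
qed simp

lemma Delta_funpow_eq_sum_compression: "Delta (T ^^ n) x = (\<Sum>k<n. (B ^^ k) (D x))"
proof -
  have "adj (T ^^ k) (D ((T ^^ k) x)) = (B ^^ k) (D x)" for k
  proof -
    have "adj (T ^^ k) (D ((T ^^ k) x)) = (adj C ^^ k) (D ((T ^^ k) x))"
      by (simp only: adj_funpow_Delta
          commute_funpow[of D "adj C", OF Delta_adj_compression_commute])
    also have "\<dots> = (B ^^ k) (D x)"
      by (simp only: Delta_funpow_apply adj_compression_funpow_compression)
    finally show ?thesis .
  qed
  then show ?thesis by (simp add: Delta_funpow_eq_sum[OF T])
qed

lemma Delta_funpow_apply_funpow: "Delta (T ^^ n) ((T ^^ n) x) = P\<^sub>M ((T ^^ n) (Delta (T ^^ n) x))"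
proof -
  have C_B: "(C ^^ n) ((B ^^ k) y) = (B ^^ k) ((C ^^ n) y)" for k y
    by (rule commute_funpow[of "B ^^ k" C, symmetric])
      (rule commute_funpow[of C B, OF compression_commute_adj_compression, symmetric])
  have D_B: "D ((B ^^ k) y) = (B ^^ k) (D y)" for k y
    by (rule commute_funpow) (simp add: Delta_compression_commute Delta_adj_compression_commute)
  have "Delta (T ^^ n) ((T ^^ n) x) = (\<Sum>k<n. (B ^^ k) ((C ^^ n) (D x)))"
    by (simp add: Delta_funpow_eq_sum_compression Delta_funpow_apply)
  also have "\<dots> = (C ^^ n) (\<Sum>k<n. (B ^^ k) (D x))"
    by (simp add: cbounded_apply_sum[OF cbounded_funpow[OF C_bounded]] C_B)
  also have "(\<Sum>k<n. (B ^^ k) (D x)) = P\<^sub>M (\<Sum>k<n. (B ^^ k) (D x))"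
    by (simp add: cbounded_apply_sum[OF PM_bounded] D_B[symmetric]
        proj_closure_range_apply[OF D_bounded D_selfadjoint])
  also have "(C ^^ n) \<dots> = P\<^sub>M ((T ^^ n) (\<Sum>k<n. (B ^^ k) (D x)))"
    by (rule proj_funpow_apply[symmetric])
  finally show ?thesis by (simp add: Delta_funpow_eq_sum_compression)
qed

lemma Delta_funpow_eq_0_iff:
  assumes "n \<ge> 1"
  shows "Delta (T ^^ n) x = 0 \<longleftrightarrow> D x = 0"
proof
  assume "Delta (T ^^ n) x = 0"
  moreover have "(norm ((T ^^ 1) x))\<^sup>2 \<le> (norm ((T ^^ n) x))\<^sup>2"
    by (rule concave_op_norm_funpow_mono[OF T concave assms])
  ultimately have "Re (cinner (D x) x) \<le> 0"
    using Re_cinner_Delta[OF T, of x] Re_cinner_Delta[OF cbounded_funpow[OF T], of n x] by simp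
  then show "D x = 0" by (rule opos_apply_eq_0[OF opos_Delta[OF T concave]])
qed (simp add: Delta_funpow_eq_sum_compression
    cbounded_apply_0[OF cbounded_funpow[OF cbounded_comp[OF adjC_bounded C_bounded]]])

lemma closure_range_Delta_funpow: "n \<ge> 1 \<Longrightarrow> closure (range (Delta (T ^^ n))) = closure (range D)"
  unfolding set_eq_iff
    closure_range_iff_orthogonal_kernel[OF cbounded_Delta[OF cbounded_funpow[OF T]]
      Delta_selfadjoint[OF cbounded_funpow[OF T]]]
    closure_range_iff_orthogonal_kernel[OF D_bounded D_selfadjoint]
  by (simp add: Delta_funpow_eq_0_iff)

lemma regular_Delta_funpow:
  assumes "n \<ge> 1"
  shows "regular (Delta (T ^^ n)) (T ^^ n)"
proof (rule regular_if_apply_eq_proj[OF opos_Delta[OF cbounded_funpow[OF T] concave_op_funpow[OF T concave]]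
      cbounded_funpow[OF T]])
  show "Delta (T ^^ n) ((T ^^ n) x) = 0" if "Delta (T ^^ n) x = 0" for x
    using that by (simp add: Delta_funpow_eq_0_iff[OF assms] Delta_funpow_apply
        cbounded_apply_0[OF cbounded_funpow[OF C_bounded]])
  show "Delta (T ^^ n) ((T ^^ n) x)
      = proj (closure (range (Delta (T ^^ n)))) ((T ^^ n) (Delta (T ^^ n) x))" for x
    unfolding closure_range_Delta_funpow[OF assms] by (rule Delta_funpow_apply_funpow)
qed

end

lemma regular_iff_quasinormal_contraction:
  assumes "\<sigma> > 0" and "\<sigma>\<^sup>2 = onorm D + 1"
    and "\<forall>x\<in>closure (range D). norm ((1 / \<sigma>) *\<^sub>R proj {y. D y = 0} (T x)) = norm x"
  shows "regular D T \<longleftrightarrow> quasinormal C \<and> (\<forall>x\<in>closure (range D). norm (C x) \<le> norm x)"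
proof -
  have "C = (\<lambda>x. 0)" by (rule compression_eq_0_if_isometric[OF assms])
  moreover have "adj (\<lambda>x::'a. 0) = (\<lambda>x. 0)" by (rule adj_eqI) simp
  ultimately show ?thesis using regular_if_compression_eq_0 by (simp add: quasinormal_def)
qed

end

theorem corollary4p4:
  fixes T :: "'a::chilbert_space \<Rightarrow> 'a"
  assumes "cbounded T"
  shows "(concave_op T \<and> regular (Delta T) T
            \<and> quasinormal (compression (closure (range (Delta T))) T)
          \<longrightarrow> (\<forall>n::nat. n \<ge> 2 \<longrightarrow> concave_op (T ^^ n) \<and> regular (Delta (T ^^ n)) (T ^^ n)))
       \<and> (\<forall>\<sigma>::real. concave_op T \<and> \<sigma> > 0 \<and> \<sigma>\<^sup>2 = onorm (Delta T) + 1
            \<and> (\<forall>x\<in>closure (range (Delta T)).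
                 norm ((1 / \<sigma>) *\<^sub>R proj {y. Delta T y = 0} (T x)) = norm x)
          \<longrightarrow> (regular (Delta T) T \<longleftrightarrow>
                 quasinormal (compression (closure (range (Delta T))) T)
                 \<and> (\<forall>x\<in>closure (range (Delta T)).
                      norm (compression (closure (range (Delta T))) T x) \<le> norm x)))"
proof (rule conjI; intro allI impI)
  fix n :: nat
  assume "concave_op T \<and> regular (Delta T) T \<and> quasinormal (compression (closure (range (Delta T))) T)"
    and "2 \<le> n"
  then show "concave_op (T ^^ n) \<and> regular (Delta (T ^^ n)) (T ^^ n)"
    using concave_op_funpow[OF assms] regular_Delta_funpow[OF assms] by simp
next
  fix \<sigma> :: real
  assume "concave_op T \<and> \<sigma> > 0 \<and> \<sigma>\<^sup>2 = onorm (Delta T) + 1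
    \<and> (\<forall>x\<in>closure (range (Delta T)). norm ((1 / \<sigma>) *\<^sub>R proj {y. Delta T y = 0} (T x)) = norm x)"
  then show "regular (Delta T) T \<longleftrightarrow> quasinormal (compression (closure (range (Delta T))) T)
      \<and> (\<forall>x\<in>closure (range (Delta T)). norm (compression (closure (range (Delta T))) T x) \<le> norm x)"
    using regular_iff_quasinormal_contraction[OF assms] by blast
qed

end
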